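(* Let $N_1,N_2\ge1$ be dyadic and suppose $u_1,u_2$ are functions on $\mathbb{R}\times\mathbb{T}_\gamma^2$ with $\operatorname{supp}\widetilde{u_1}\subset\mathfrak{P}_{N_1}$ and $\operatorname{supp}\widetilde{u_2}\subset\mathfrak{P}_{N_2}$. Then for any sufficiently small $\epsilon>0$, \[ \|u_1u_2\|_{L^2_{t,x}}\lesssim \max\{N_1,N_2\}^{\epsilon}\Big(\|u_1\|_{X^{0,\frac12-\epsilon,1}_S}\|u_2\|_{X^{4\epsilon,\frac12-\epsilon,1}_S}+\|u_1\|_{X^{0,\frac12-\epsilon,1}_S}\|u_2\|_{X^{\frac12+2\epsilon,\epsilon,1}_S}\Big), \] with implicit constant independent of $N_1,N_2,u_1,u_2$.
   Context: $\mathbb{T}_\gamma^2=\mathbb{R}^2/(2\pi\gamma_1\mathbb{Z}\times2\pi\gamma_2\mathbb{Z})$, frequencies $k\in\gamma_1^{-1}\mathbb{Z}\times\gamma_2^{-1}\mathbb{Z}$; $\widetilde u(\tau,k)$ is the space-time Fourier transform. $\mathfrak{P}_1:=\{(\tau,k):|k|\le2\}$, $\mathfrak{P}_N:=\{(\tau,k):\frac N2\le|k|\le2N\}$ for $N\ge2$. Let $\eta\in C^\infty(\mathbb{R})$ be even, $\eta\equiv1$ on $[-1,1]$, $\operatorname{supp}\eta\subset(-2,2)$, $0\le\eta\le1$; $\eta_1:=\eta$, $\eta_N(r):=\eta(r/N)-\eta(2r/N)$ for dyadic $N\ge2$. $P_N$ is the spatial Fourier multiplier $\eta_N(|k|)$;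 $Q^S_L$ is the space-time Fourier multiplier $\eta_L(\tau+|k|^2)$; $P^S_{N,L}=P_NQ^S_L$. $\|u\|_{X^{s,b,p}_S}:=\big\|\|N^sL^b\|P^S_{N,L}u\|_{L^2_{t,x}}\|_{\ell^p_L}\big\|_{\ell^2_N}$ over dyadic $N,L\ge1$. *)

theory Defs
  imports "HOL-Analysis.Analysis"
begin

text \<open>The torus is T = R^2/(2 pi g1 Z x 2 pi g2 Z) with g1, g2 > 0.
A function u on R x T is represented by its space-time Fourier transform
  Fu tau m = integral over R x T of u(t,x) exp(-i(t tau + k.x)) dx dt,
with frequency k = (m1/g1, m2/g2), m in Z^2.  All norms below are the physical-space
L^2 norms computed through Plancherel; the product u1 u2 is computed through the
convolution theorem.\<close>

type_synonym stfun = "real \<Rightarrow> int \<times> int \<Rightarrow> complex"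

definition smooth_real :: "(real \<Rightarrow> real) \<Rightarrow> bool" where
  "smooth_real f \<longleftrightarrow> (\<forall>n x. ((deriv ^^ n) f) differentiable (at x))"

definition bump :: "(real \<Rightarrow> real) \<Rightarrow> bool" where
  "bump \<eta> \<longleftrightarrow> smooth_real \<eta> \<and> (\<forall>r. \<eta> (- r) = \<eta> r)
     \<and> (\<forall>r. \<bar>r\<bar> \<le> 1 \<longrightarrow> \<eta> r = 1)
     \<and> (\<forall>r. \<eta> r \<noteq> 0 \<longrightarrow> \<bar>r\<bar> < 2)
     \<and> (\<forall>r. 0 \<le> \<eta> r \<and> \<eta> r \<le> 1)"

definition dyadic :: "real \<Rightarrow> bool" where
  "dyadic N \<longleftrightarrow> (\<exists>j::nat. N = 2 ^ j)"

definition eta_dy :: "(real \<Rightarrow> real) \<Rightarrow> real \<Rightarrow> real \<Rightarrow> real" where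
  "eta_dy \<eta> N r = (if N = 1 then \<eta> r else \<eta> (r / N) - \<eta> (2 * r / N))"

definition freq :: "real \<Rightarrow> real \<Rightarrow> int \<times> int \<Rightarrow> real \<times> real" where
  "freq g1 g2 m = (real_of_int (fst m) / g1, real_of_int (snd m) / g2)"

definition knorm :: "real \<Rightarrow> real \<Rightarrow> int \<times> int \<Rightarrow> real" where
  "knorm g1 g2 m = sqrt ((real_of_int (fst m) / g1)^2 + (real_of_int (snd m) / g2)^2)"

definition in_PN :: "real \<Rightarrow> real \<Rightarrow> real \<Rightarrow> int \<times> int \<Rightarrow> bool" where
  "in_PN g1 g2 N m = (if N = 1 then knorm g1 g2 m \<le> 2
                      else N / 2 \<le> knorm g1 g2 m \<and> knorm g1 g2 m \<le> 2 * N)"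

definition supp_in_PN :: "real \<Rightarrow> real \<Rightarrow> real \<Rightarrow> stfun \<Rightarrow> bool" where
  "supp_in_PN g1 g2 N F \<longleftrightarrow> (\<forall>\<tau> m. \<not> in_PN g1 g2 N m \<longrightarrow> F \<tau> m = 0)"

definition enn_sqrt :: "ennreal \<Rightarrow> ennreal" where
  "enn_sqrt x = (if x = top then top else ennreal (sqrt (enn2real x)))"

definition torus_vol :: "real \<Rightarrow> real \<Rightarrow> real" where
  "torus_vol g1 g2 = 4 * pi^2 * g1 * g2"

definition L2norm :: "real \<Rightarrow> real \<Rightarrow> stfun \<Rightarrow> ennreal" where
  "L2norm g1 g2 F = enn_sqrt (ennreal (1 / (2 * pi * torus_vol g1 g2)) *
      (\<integral>\<^sup>+ \<tau>. (\<integral>\<^sup>+ m. ennreal ((cmod (F \<tau> m))^2) \<partial>count_space UNIV) \<partial>lborel))"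

definition prod_ft :: "real \<Rightarrow> real \<Rightarrow> stfun \<Rightarrow> stfun \<Rightarrow> stfun" where
  "prod_ft g1 g2 F G = (\<lambda>\<tau> m. complex_of_real (1 / (2 * pi * torus_vol g1 g2)) *
      (\<Sum>\<^sub>\<infinity> m1. \<integral> \<tau>1. F \<tau>1 m1 * G (\<tau> - \<tau>1) (m - m1) \<partial>lborel))"

definition PS :: "real \<Rightarrow> real \<Rightarrow> (real \<Rightarrow> real) \<Rightarrow> real \<Rightarrow> real \<Rightarrow> stfun \<Rightarrow> stfun" where
  "PS g1 g2 \<eta> N L F = (\<lambda>\<tau> m. complex_of_real
      (eta_dy \<eta> N (knorm g1 g2 m) * eta_dy \<eta> L (\<tau> + (knorm g1 g2 m)^2)) * F \<tau> m)"

definition XS1 :: "real \<Rightarrow> real \<Rightarrow> (real \<Rightarrow> real) \<Rightarrow> real \<Rightarrow> real \<Rightarrow> stfun \<Rightarrow> ennreal" where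
  "XS1 g1 g2 \<eta> s b F = enn_sqrt (\<Sum>j. (\<Sum>l.
      ennreal ((2 ^ j) powr s * (2 ^ l) powr b)
        * L2norm g1 g2 (PS g1 g2 \<eta> (2 ^ j) (2 ^ l) F))\<^sup>2)"

end

theory Submission
  imports Defs
begin

text \<open>
  All estimates are made for the moduli of the space-time Fourier transforms. By Plancherel the
  norm of u1 u2 is that of the convolution of the transforms, which is dominated by the convolution
  of their moduli. Decomposing both moduli with the partition of unity P^S_{N,L} and using
  Minkowski's inequality reduces the claim to dyadic pieces a, b. For these, Cauchy-Schwarz on the
  fibres of the convolution gives ||a * b|| \<le> M^(1/2) ||a|| ||b||, where M bounds the measure of
  {(\<tau>1, k1) : (\<tau>1, k1) \<in> supp a, (\<tau> - \<tau>1, k - k1) \<in> supp b} uniformly in (\<tau>, k).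
  The time integral contributes 4 min(L1, L2); the number of admissible k1 is at most
  min(N2^2, max(L1, L2) + N2), because |k1|^2 + |k - k1|^2 = 2 |k1 - k/2|^2 + |k|^2/2 confines k1
  to a thin annulus centred at k/2 inside a ball of radius 2 N2. An elementary
  inequality turns min(L1, L2) min(N2^2, max(L1, L2) + N2) into the squared weights
  L1^(1/2-\<epsilon>) (N2^(4\<epsilon>) L2^(1/2-\<epsilon>) + N2^(1/2+2\<epsilon>) L2^\<epsilon>). Finally, a function with
  Fourier support in P_N only sees the three dyadic scales N/2, N, 2N, so each l^1-sum over
  scales is bounded by three times the X^{s,b,1} norm.
\<close>

lemma power2_enn_sqrt[simp]: "(enn_sqrt x)^2 = x"
  by (cases x) (auto simp: enn_sqrt_def ennreal_power)

lemma enn_sqrt_power2[simp]: "enn_sqrt (y^2) = y"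
  by (cases y) (auto simp: enn_sqrt_def ennreal_power)

lemma power2_le_power2_iff_ennreal: "(x::ennreal)^2 \<le> y^2 \<longleftrightarrow> x \<le> y"
proof
  assume a: "x^2 \<le> y^2" show "x \<le> y"
  proof (rule ccontr)
    assume "\<not> x \<le> y" hence "y < x" by simp
    then obtain r where r: "y = ennreal r" "0 \<le> r" by (cases y) auto
    show False
    proof (cases x)
      case (real s)
      with r \<open>y < x\<close> have "r < s" by (simp add: ennreal_less_iff)
      hence "r^2 < s^2" using r by (intro power_strict_mono) auto
      with a r real \<open>r < s\<close> show False by (simp add: ennreal_power)
    next
      case top with a r show False by (simp add: ennreal_power top_unique)
    qed
  qed
qed (rule power_mono_ennreal)

lemma enn_sqrt_le_iff: "enn_sqrt x \<le> y \<longleftrightarrow> x \<le> y^2"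
  by (metis power2_le_power2_iff_ennreal power2_enn_sqrt)

lemma enn_sqrt_mono: "x \<le> y \<Longrightarrow> enn_sqrt x \<le> enn_sqrt y"
  by (simp add: enn_sqrt_le_iff)

lemma enn_sqrt_mult: "enn_sqrt (x * y) = enn_sqrt x * enn_sqrt y"
  by (metis enn_sqrt_power2 power2_enn_sqrt power_mult_distrib)

lemma enn_sqrt_ennreal: "0 \<le> x \<Longrightarrow> enn_sqrt (ennreal x) = ennreal (sqrt x)"
  by (simp add: enn_sqrt_def)

lemma Cauchy_Schwarz_nn_integral_sqrt:
  assumes "f \<in> borel_measurable M" "g \<in> borel_measurable M"
  shows "(\<integral>\<^sup>+x. f x * g x \<partial>M) \<le> enn_sqrt (\<integral>\<^sup>+x. f x ^ 2 \<partial>M) * enn_sqrt (\<integral>\<^sup>+x. g x ^ 2 \<partial>M)"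
proof -
  have "(\<integral>\<^sup>+x. f x * g x \<partial>M) = enn_sqrt ((\<integral>\<^sup>+x. f x * g x \<partial>M)^2)" by simp
  also have "\<dots> \<le> enn_sqrt ((\<integral>\<^sup>+x. f x ^ 2 \<partial>M) * (\<integral>\<^sup>+x. g x ^ 2 \<partial>M))"
    by (rule enn_sqrt_mono) (rule Cauchy_Schwarz_nn_integral[OF assms])
  also have "\<dots> = enn_sqrt (\<integral>\<^sup>+x. f x ^ 2 \<partial>M) * enn_sqrt (\<integral>\<^sup>+x. g x ^ 2 \<partial>M)"
    by (rule enn_sqrt_mult)
  finally show ?thesis .
qed

lemma Cauchy_Schwarz_nn_integral_count_space:
  fixes f g :: "'a \<Rightarrow> 'b \<Rightarrow> ennreal"
  assumes "\<And>m. f m \<in> borel_measurable M" "\<And>m. g m \<in> borel_measurable M"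
  shows "(\<integral>\<^sup>+m. (\<integral>\<^sup>+x. f m x * g m x \<partial>M) \<partial>count_space UNIV)
     \<le> enn_sqrt (\<integral>\<^sup>+m. (\<integral>\<^sup>+x. f m x ^ 2 \<partial>M) \<partial>count_space UNIV)
       * enn_sqrt (\<integral>\<^sup>+m. (\<integral>\<^sup>+x. g m x ^ 2 \<partial>M) \<partial>count_space UNIV)"
proof -
  have "(\<integral>\<^sup>+m. (\<integral>\<^sup>+x. f m x * g m x \<partial>M) \<partial>count_space UNIV)
      \<le> (\<integral>\<^sup>+m. enn_sqrt (\<integral>\<^sup>+x. f m x ^ 2 \<partial>M) * enn_sqrt (\<integral>\<^sup>+x. g m x ^ 2 \<partial>M) \<partial>count_space UNIV)"
    by (intro nn_integral_mono Cauchy_Schwarz_nn_integral_sqrt assms)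
  also have "\<dots> \<le> enn_sqrt (\<integral>\<^sup>+m. (enn_sqrt (\<integral>\<^sup>+x. f m x ^ 2 \<partial>M))^2 \<partial>count_space UNIV)
       * enn_sqrt (\<integral>\<^sup>+m. (enn_sqrt (\<integral>\<^sup>+x. g m x ^ 2 \<partial>M))^2 \<partial>count_space UNIV)"
    by (rule Cauchy_Schwarz_nn_integral_sqrt) auto
  finally show ?thesis by simp
qed

lemma power2_suminf_ennreal: "(\<Sum>i. x i :: ennreal)^2 = (\<Sum>i. \<Sum>j. x i * x j)"
proof -
  have "(\<Sum>i. x i)^2 = (\<Sum>i. x i * (\<Sum>j. x j))"
    unfolding power2_eq_square by (rule ennreal_suminf_multc[symmetric])
  also have "\<dots> = (\<Sum>i. \<Sum>j. x i * x j)"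
    by (rule suminf_cong) (rule ennreal_suminf_cmult[symmetric])
  finally show ?thesis .
qed

section \<open>Mixed norms and convolution on the real line times the lattice\<close>

text \<open>Working with nonnegative extended reals makes Tonelli and monotone convergence available without
  any integrability hypotheses.\<close>
type_synonym ennfun = "real \<Rightarrow> int \<times> int \<Rightarrow> ennreal"

definition mixed_norm_sq :: "ennfun \<Rightarrow> ennreal" where
  "mixed_norm_sq h = (\<integral>\<^sup>+ m. (\<integral>\<^sup>+ \<tau>. (h \<tau> m)^2 \<partial>lborel) \<partial>count_space UNIV)"

definition mixed_norm :: "ennfun \<Rightarrow> ennreal" where "mixed_norm h = enn_sqrt (mixed_norm_sq h)"

lemma mixed_norm_sq_mono: "(\<And>\<tau> m. f \<tau> m \<le> g \<tau> m) \<Longrightarrow> mixed_norm_sq f \<le> mixed_norm_sq g"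
  unfolding mixed_norm_sq_def by (intro nn_integral_mono power_mono_ennreal)

lemma mixed_norm_mono: "(\<And>\<tau> m. f \<tau> m \<le> g \<tau> m) \<Longrightarrow> mixed_norm f \<le> mixed_norm g"
  unfolding mixed_norm_def by (intro enn_sqrt_mono mixed_norm_sq_mono)

lemma mixed_norm_suminf_le:
  assumes meas[measurable]: "\<And>i m. (\<lambda>\<tau>. h i \<tau> m) \<in> borel_measurable lborel"
  shows "mixed_norm (\<lambda>\<tau> m. \<Sum>i. h i \<tau> m) \<le> (\<Sum>i. mixed_norm (h i))"
  unfolding mixed_norm_def enn_sqrt_le_iff
proof -
  have inner: "(\<integral>\<^sup>+ \<tau>. (\<Sum>i. \<Sum>j. h i \<tau> m * h j \<tau> m) \<partial>lborel)
      = (\<Sum>i. \<Sum>j. (\<integral>\<^sup>+ \<tau>. h i \<tau> m * h j \<tau> m \<partial>lborel))" for m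
    by (subst nn_integral_suminf, measurable, intro suminf_cong nn_integral_suminf, measurable)
  have "mixed_norm_sq (\<lambda>\<tau> m. \<Sum>i. h i \<tau> m)
      = (\<integral>\<^sup>+ m. (\<Sum>i. \<Sum>j. (\<integral>\<^sup>+ \<tau>. h i \<tau> m * h j \<tau> m \<partial>lborel)) \<partial>count_space UNIV)"
    unfolding mixed_norm_sq_def power2_suminf_ennreal inner ..
  also have "\<dots> = (\<Sum>i. \<Sum>j. (\<integral>\<^sup>+ m. (\<integral>\<^sup>+ \<tau>. h i \<tau> m * h j \<tau> m \<partial>lborel) \<partial>count_space UNIV))"
    by (subst nn_integral_suminf, simp, intro suminf_cong nn_integral_suminf, simp)
  also have "\<dots> \<le> (\<Sum>i. \<Sum>j. enn_sqrt (mixed_norm_sq (h i)) * enn_sqrt (mixed_norm_sq (h j)))"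
    unfolding mixed_norm_sq_def
    by (intro suminf_le summableI allI Cauchy_Schwarz_nn_integral_count_space meas)
  also have "\<dots> = (\<Sum>i. enn_sqrt (mixed_norm_sq (h i)))^2" by (rule power2_suminf_ennreal[symmetric])
  finally show "mixed_norm_sq (\<lambda>\<tau> m. \<Sum>i. h i \<tau> m) \<le> (\<Sum>i. enn_sqrt (mixed_norm_sq (h i)))^2" .
qed

lemma mixed_norm_suminf4_le:
  fixes H :: "nat \<Rightarrow> nat \<Rightarrow> nat \<Rightarrow> nat \<Rightarrow> ennfun"
  assumes mH[measurable]: "\<And>a b c d m. (\<lambda>\<tau>. H a b c d \<tau> m) \<in> borel_measurable lborel"
  shows "mixed_norm (\<lambda>\<tau> m. \<Sum>a. \<Sum>b. \<Sum>c. \<Sum>d. H a b c d \<tau> m) \<le> (\<Sum>a. \<Sum>b. \<Sum>c. \<Sum>d. mixed_norm (H a b c d))"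
proof -
  have "mixed_norm (\<lambda>\<tau> m. \<Sum>a. \<Sum>b. \<Sum>c. \<Sum>d. H a b c d \<tau> m) \<le> (\<Sum>a. mixed_norm (\<lambda>\<tau> m. \<Sum>b. \<Sum>c. \<Sum>d. H a b c d \<tau> m))"
    by (rule mixed_norm_suminf_le) measurable
  also have "\<dots> \<le> (\<Sum>a. \<Sum>b. mixed_norm (\<lambda>\<tau> m. \<Sum>c. \<Sum>d. H a b c d \<tau> m))"
    by (intro suminf_le summableI allI mixed_norm_suminf_le) measurable
  also have "\<dots> \<le> (\<Sum>a. \<Sum>b. \<Sum>c. mixed_norm (\<lambda>\<tau> m. \<Sum>d. H a b c d \<tau> m))"
    by (intro suminf_le summableI allI mixed_norm_suminf_le) measurable
  also have "\<dots> \<le> (\<Sum>a. \<Sum>b. \<Sum>c. \<Sum>d. mixed_norm (H a b c d))"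
    by (intro suminf_le summableI allI mixed_norm_suminf_le) measurable
  finally show ?thesis .
qed

definition conv :: "ennfun \<Rightarrow> ennfun \<Rightarrow> ennfun" where
  "conv a b \<tau> m = (\<integral>\<^sup>+ m1. (\<integral>\<^sup>+ \<tau>1. a \<tau>1 m1 * b (\<tau> - \<tau>1) (m - m1) \<partial>lborel) \<partial>count_space UNIV)"

lemma borel_measurable_reflect_shift:
  assumes "(\<lambda>\<tau>. b \<tau>) \<in> borel_measurable lborel"
  shows "(\<lambda>\<tau>1. b (\<tau> - \<tau>1)) \<in> borel_measurable lborel"
  by (rule measurable_compose[OF _ assms]) simp

lemma nn_integral_lborel_shift:
  fixes f :: "real \<Rightarrow> ennreal" and t :: real
  assumes "f \<in> borel_measurable borel"
  shows "(\<integral>\<^sup>+ x. f (x - t) \<partial>lborel) = (\<integral>\<^sup>+ x. f x \<partial>lborel)"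
  using nn_integral_real_affine[OF assms, where c=1 and t="-t"] by simp

lemma bij_betw_minus_right: "bij_betw (\<lambda>m::int\<times>int. m - m1) UNIV UNIV"
  by (rule bij_betwI[where g="\<lambda>m. m + m1"]) auto

lemma borel_measurable_conv_kernel:
  fixes A B :: "real \<Rightarrow> ennreal"
  assumes [measurable]: "A \<in> borel_measurable lborel" "B \<in> borel_measurable lborel"
  shows "(\<lambda>(t, t1). A t1 * B (t - t1)) \<in> borel_measurable (lborel \<Otimes>\<^sub>M lborel)"
proof -
  have [measurable]: "(\<lambda>p::real\<times>real. fst p - snd p) \<in> lborel \<Otimes>\<^sub>M lborel \<rightarrow>\<^sub>M lborel"
    by simp
  show ?thesis by measurable
qed

lemma borel_measurable_conv_kernel':
  fixes A B :: "real \<Rightarrow> ennreal"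
  assumes [measurable]: "A \<in> borel_measurable lborel" "B \<in> borel_measurable lborel"
  shows "(\<lambda>(t1, t). A t1 * B (t - t1)) \<in> borel_measurable (lborel \<Otimes>\<^sub>M lborel)"
proof -
  have [measurable]: "(\<lambda>p::real\<times>real. snd p - fst p) \<in> lborel \<Otimes>\<^sub>M lborel \<rightarrow>\<^sub>M lborel"
    by simp
  show ?thesis by measurable
qed

lemma borel_measurable_conv_lborel:
  fixes A B :: "real \<Rightarrow> ennreal"
  assumes "A \<in> borel_measurable lborel" "B \<in> borel_measurable lborel"
  shows "(\<lambda>t. \<integral>\<^sup>+ t1. A t1 * B (t - t1) \<partial>lborel) \<in> borel_measurable lborel"
  using lborel.borel_measurable_nn_integral[OF borel_measurable_conv_kernel[OF assms]] by simp

lemma nn_integral_conv_lborel: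
  fixes A B :: "real \<Rightarrow> ennreal"
  assumes [measurable]: "A \<in> borel_measurable lborel" "B \<in> borel_measurable lborel"
  shows "(\<integral>\<^sup>+ t. (\<integral>\<^sup>+ t1. A t1 * B (t - t1) \<partial>lborel) \<partial>lborel)
       = (\<integral>\<^sup>+ t1. A t1 \<partial>lborel) * (\<integral>\<^sup>+ t. B t \<partial>lborel)"
proof -
  have "(\<integral>\<^sup>+ t. (\<integral>\<^sup>+ t1. A t1 * B (t - t1) \<partial>lborel) \<partial>lborel)
       = (\<integral>\<^sup>+ t1. (\<integral>\<^sup>+ t. A t1 * B (t - t1) \<partial>lborel) \<partial>lborel)"
    using lborel_pair.Fubini'[of "\<lambda>t1 t. A t1 * B (t - t1)", OF borel_measurable_conv_kernel'[OF assms]] by simp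
  also have "\<dots> = (\<integral>\<^sup>+ t1. A t1 * (\<integral>\<^sup>+ t. B t \<partial>lborel) \<partial>lborel)"
  proof (rule nn_integral_cong)
    fix t1
    have mB: "(\<lambda>t. B (t - t1)) \<in> borel_measurable lborel" by measurable
    have "(\<integral>\<^sup>+ t. A t1 * B (t - t1) \<partial>lborel) = A t1 * (\<integral>\<^sup>+ t. B (t - t1) \<partial>lborel)"
      by (rule nn_integral_cmult[OF mB])
    also have "(\<integral>\<^sup>+ t. B (t - t1) \<partial>lborel) = (\<integral>\<^sup>+ t. B t \<partial>lborel)"
      by (rule nn_integral_lborel_shift) (use assms in simp)
    finally show "(\<integral>\<^sup>+ t. A t1 * B (t - t1) \<partial>lborel) = A t1 * (\<integral>\<^sup>+ t. B t \<partial>lborel)" .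
  qed
  also have "\<dots> = (\<integral>\<^sup>+ t1. A t1 \<partial>lborel) * (\<integral>\<^sup>+ t. B t \<partial>lborel)"
    by (rule nn_integral_multc) simp
  finally show ?thesis .
qed

lemma infinite_UNIV_int_pair: "infinite (UNIV :: (int \<times> int) set)"
  by (simp add: infinite_UNIV_char_0 finite_prod)

lemma nn_integral_count_space_int_pair:
  fixes g :: "int \<times> int \<Rightarrow> ennreal"
  shows "(\<integral>\<^sup>+ i. g i \<partial>count_space UNIV) = (\<Sum>n. g (from_nat_into UNIV n))"
proof -
  have b: "bij_betw (from_nat_into (UNIV :: (int \<times> int) set)) UNIV UNIV"
    by (rule bij_betw_from_nat_into) (simp_all add: infinite_UNIV_int_pair)
  show ?thesis
    by (simp add: nn_integral_bij_count_space[OF b, symmetric] nn_integral_count_space_nat)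
qed

lemma borel_measurable_nn_integral_count_space:
  fixes f :: "int \<times> int \<Rightarrow> 'a \<Rightarrow> ennreal"
  assumes "\<And>i. f i \<in> borel_measurable M"
  shows "(\<lambda>x. \<integral>\<^sup>+ i. f i x \<partial>count_space UNIV) \<in> borel_measurable M"
  unfolding nn_integral_count_space_int_pair using assms by measurable

lemma borel_measurable_conv:
  assumes "\<And>m. (\<lambda>\<tau>. a \<tau> m) \<in> borel_measurable lborel" "\<And>m. (\<lambda>\<tau>. b \<tau> m) \<in> borel_measurable lborel"
  shows "(\<lambda>\<tau>. conv a b \<tau> m) \<in> borel_measurable lborel"
  unfolding conv_def by (rule borel_measurable_nn_integral_count_space) (rule borel_measurable_conv_lborel; fact)

lemma conv_mono:
  assumes "\<And>t m. a t m \<le> a' t m" "\<And>t m. b t m \<le> b' t m"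
  shows "conv a b \<tau> m \<le> conv a' b' \<tau> m"
  unfolding conv_def by (intro nn_integral_mono mult_mono assms) auto

lemma conv_suminf_left:
  assumes m1[measurable]: "\<And>i m. (\<lambda>\<tau>. a i \<tau> m) \<in> borel_measurable lborel"
    and m2: "\<And>m. (\<lambda>\<tau>. b \<tau> m) \<in> borel_measurable lborel"
  shows "conv (\<lambda>t m. \<Sum>i. a i t m) b \<tau> m = (\<Sum>i. conv (a i) b \<tau> m)"
proof -
  have mb[measurable]: "(\<lambda>\<tau>1. b (\<tau> - \<tau>1) m') \<in> borel_measurable lborel" for m'
    using borel_measurable_reflect_shift[OF m2] .
  have "(\<integral>\<^sup>+ \<tau>1. (\<Sum>i. a i \<tau>1 m1) * b (\<tau> - \<tau>1) (m - m1) \<partial>lborel)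
     = (\<Sum>i. \<integral>\<^sup>+ \<tau>1. a i \<tau>1 m1 * b (\<tau> - \<tau>1) (m - m1) \<partial>lborel)" for m1
    unfolding ennreal_suminf_multc[symmetric] by (rule nn_integral_suminf) measurable
  then show ?thesis unfolding conv_def
    by (simp add: nn_integral_suminf)
qed

lemma conv_suminf_right:
  assumes m1[measurable]: "\<And>m. (\<lambda>\<tau>. a \<tau> m) \<in> borel_measurable lborel"
    and m2: "\<And>i m. (\<lambda>\<tau>. b i \<tau> m) \<in> borel_measurable lborel"
  shows "conv a (\<lambda>t m. \<Sum>i. b i t m) \<tau> m = (\<Sum>i. conv a (b i) \<tau> m)"
proof -
  have mb[measurable]: "(\<lambda>\<tau>1. b i (\<tau> - \<tau>1) m') \<in> borel_measurable lborel" for i m'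
    using borel_measurable_reflect_shift[OF m2] .
  have "(\<integral>\<^sup>+ \<tau>1. a \<tau>1 m1 * (\<Sum>i. b i (\<tau> - \<tau>1) (m - m1)) \<partial>lborel)
     = (\<Sum>i. \<integral>\<^sup>+ \<tau>1. a \<tau>1 m1 * b i (\<tau> - \<tau>1) (m - m1) \<partial>lborel)" for m1
    unfolding ennreal_suminf_cmult[symmetric] by (rule nn_integral_suminf) measurable
  then show ?thesis unfolding conv_def
    by (simp add: nn_integral_suminf)
qed

lemma nn_integral_lborel_count_space_swap:
  fixes h :: ennfun
  assumes "\<And>m. (\<lambda>\<tau>. h \<tau> m) \<in> borel_measurable lborel"
  shows "(\<integral>\<^sup>+ \<tau>. (\<integral>\<^sup>+ m. h \<tau> m \<partial>count_space UNIV) \<partial>lborel) = (\<integral>\<^sup>+ m. (\<integral>\<^sup>+ \<tau>. h \<tau> m \<partial>lborel) \<partial>count_space UNIV)"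
  by (rule nn_integral_count_space_nn_integral) (simp, rule assms)

definition overlap :: "(real \<Rightarrow> int \<times> int \<Rightarrow> bool) \<Rightarrow> (real \<Rightarrow> int \<times> int \<Rightarrow> bool) \<Rightarrow> real \<Rightarrow> int \<times> int \<Rightarrow> ennreal" where
  "overlap sa sb \<tau> m = (\<integral>\<^sup>+ m1. (\<integral>\<^sup>+ \<tau>1. indicator {t. sa t m1} \<tau>1 * indicator {t. sb t (m - m1)} (\<tau> - \<tau>1) \<partial>lborel) \<partial>count_space UNIV)"

lemma power2_conv_le:
  fixes a b :: ennfun and sa sb :: "real \<Rightarrow> int \<times> int \<Rightarrow> bool" and M :: ennreal
  assumes ma[measurable]: "\<And>m. (\<lambda>\<tau>. a \<tau> m) \<in> borel_measurable lborel"
    and mb[measurable]: "\<And>m. (\<lambda>\<tau>. b \<tau> m) \<in> borel_measurable lborel"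
    and sa[measurable]: "\<And>m. {\<tau>. sa \<tau> m} \<in> sets lborel"
    and sb[measurable]: "\<And>m. {\<tau>. sb \<tau> m} \<in> sets lborel"
    and za: "\<And>\<tau> m. \<not> sa \<tau> m \<Longrightarrow> a \<tau> m = 0" and zb: "\<And>\<tau> m. \<not> sb \<tau> m \<Longrightarrow> b \<tau> m = 0"
    and bound: "overlap sa sb \<tau> m \<le> M"
  shows "(conv a b \<tau> m)^2 \<le> M * conv (\<lambda>t n. (a t n)^2) (\<lambda>t n. (b t n)^2) \<tau> m"
proof -
  define I :: "int \<times> int \<Rightarrow> real \<Rightarrow> ennreal" where
    "I m1 \<tau>1 = indicator {t. sa t m1} \<tau>1 * indicator {t. sb t (m - m1)} (\<tau> - \<tau>1)" for m1 \<tau>1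
  define X where "X = (\<integral>\<^sup>+ m1. (\<integral>\<^sup>+ \<tau>1. I m1 \<tau>1 \<partial>lborel) \<partial>count_space UNIV)"
  define P where "P = (\<integral>\<^sup>+ m1. (\<integral>\<^sup>+ \<tau>1. (a \<tau>1 m1)^2 * (b (\<tau> - \<tau>1) (m - m1))^2 \<partial>lborel) \<partial>count_space UNIV)"
  have eq: "a \<tau>1 m1 * b (\<tau> - \<tau>1) (m - m1) = I m1 \<tau>1 * (a \<tau>1 m1 * b (\<tau> - \<tau>1) (m - m1))" for \<tau>1 m1
    using za[of \<tau>1 m1] zb[of "\<tau> - \<tau>1" "m - m1"] by (auto simp: indicator_def I_def)
  have I2: "(I m1 \<tau>1)^2 = I m1 \<tau>1" for m1 \<tau>1 by (auto simp: indicator_def I_def)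
  have mI: "(\<lambda>\<tau>1. I m1 \<tau>1) \<in> borel_measurable lborel" for m1
  proof -
    have "(\<lambda>t. indicator {t. sb t (m - m1)} t :: ennreal) \<in> borel_measurable lborel" by measurable
    from borel_measurable_reflect_shift[OF this, of \<tau>] show ?thesis unfolding I_def by measurable
  qed
  have mab: "(\<lambda>\<tau>1. a \<tau>1 m1 * b (\<tau> - \<tau>1) (m - m1)) \<in> borel_measurable lborel" for m1
    using borel_measurable_reflect_shift[OF mb[of "m - m1"], of \<tau>] by measurable
  have "conv a b \<tau> m = (\<integral>\<^sup>+ m1. (\<integral>\<^sup>+ \<tau>1. I m1 \<tau>1 * (a \<tau>1 m1 * b (\<tau> - \<tau>1) (m - m1)) \<partial>lborel) \<partial>count_space UNIV)"
    unfolding conv_def by (intro nn_integral_cong) (rule eq)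
  also have "\<dots> \<le> enn_sqrt (\<integral>\<^sup>+ m1. (\<integral>\<^sup>+ \<tau>1. (I m1 \<tau>1)^2 \<partial>lborel) \<partial>count_space UNIV)
     * enn_sqrt (\<integral>\<^sup>+ m1. (\<integral>\<^sup>+ \<tau>1. (a \<tau>1 m1 * b (\<tau> - \<tau>1) (m - m1))^2 \<partial>lborel) \<partial>count_space UNIV)"
    by (rule Cauchy_Schwarz_nn_integral_count_space) (rule mI, rule mab)
  also have "\<dots> = enn_sqrt X * enn_sqrt P"
    unfolding X_def P_def I2 power_mult_distrib ..
  also have "\<dots> = enn_sqrt (X * P)" by (rule enn_sqrt_mult[symmetric])
  finally have "(conv a b \<tau> m)^2 \<le> (enn_sqrt (X * P))^2" by (rule power_mono_ennreal)
  also have "\<dots> = X * P" by simp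
  also have "\<dots> \<le> M * P" using bound unfolding X_def I_def overlap_def by (rule mult_right_mono) simp
  finally show ?thesis unfolding P_def conv_def power_mult_distrib .
qed

lemma nn_integral_conv:
  fixes a b :: ennfun
  assumes [measurable]: "\<And>m. (\<lambda>\<tau>. a \<tau> m) \<in> borel_measurable lborel" "\<And>m. (\<lambda>\<tau>. b \<tau> m) \<in> borel_measurable lborel"
  shows "(\<integral>\<^sup>+ m. (\<integral>\<^sup>+ \<tau>. conv a b \<tau> m \<partial>lborel) \<partial>count_space UNIV)
    = (\<integral>\<^sup>+ m. (\<integral>\<^sup>+ \<tau>. a \<tau> m \<partial>lborel) \<partial>count_space UNIV) * (\<integral>\<^sup>+ m. (\<integral>\<^sup>+ \<tau>. b \<tau> m \<partial>lborel) \<partial>count_space UNIV)"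
proof -
  define A where "A m1 = (\<integral>\<^sup>+ t. a t m1 \<partial>lborel)" for m1
  define B where "B m1 = (\<integral>\<^sup>+ t. b t m1 \<partial>lborel)" for m1
  have inner: "(\<integral>\<^sup>+ \<tau>. conv a b \<tau> m \<partial>lborel) = (\<integral>\<^sup>+ m1. A m1 * B (m - m1) \<partial>count_space UNIV)" for m
  proof -
    have "(\<integral>\<^sup>+ \<tau>. conv a b \<tau> m \<partial>lborel)
      = (\<integral>\<^sup>+ m1. (\<integral>\<^sup>+ \<tau>. (\<integral>\<^sup>+ \<tau>1. a \<tau>1 m1 * b (\<tau> - \<tau>1) (m - m1) \<partial>lborel) \<partial>lborel) \<partial>count_space UNIV)"
      unfolding conv_def
      by (rule nn_integral_count_space_nn_integral) (auto intro!: borel_measurable_conv_lborel)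
    also have "\<dots> = (\<integral>\<^sup>+ m1. A m1 * B (m - m1) \<partial>count_space UNIV)"
      unfolding A_def B_def by (intro nn_integral_cong nn_integral_conv_lborel) simp_all
    finally show ?thesis .
  qed
  have "(\<integral>\<^sup>+ m. (\<integral>\<^sup>+ \<tau>. conv a b \<tau> m \<partial>lborel) \<partial>count_space UNIV)
      = (\<integral>\<^sup>+ m1. (\<integral>\<^sup>+ m. A m1 * B (m - m1) \<partial>count_space UNIV) \<partial>count_space UNIV)"
    unfolding inner by (rule nn_integral_count_space_nn_integral) simp_all
  also have "\<dots> = (\<integral>\<^sup>+ m1. A m1 * (\<integral>\<^sup>+ m. B m \<partial>count_space UNIV) \<partial>count_space UNIV)"
  proof (rule nn_integral_cong)
    fix m1
    have "(\<integral>\<^sup>+ m. A m1 * B (m - m1) \<partial>count_space UNIV) = A m1 * (\<integral>\<^sup>+ m. B (m - m1) \<partial>count_space UNIV)"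
      by (rule nn_integral_cmult) simp
    also have "(\<integral>\<^sup>+ m. B (m - m1) \<partial>count_space UNIV) = (\<integral>\<^sup>+ m. B m \<partial>count_space UNIV)"
      by (rule nn_integral_bij_count_space[OF bij_betw_minus_right])
    finally show "(\<integral>\<^sup>+ m. A m1 * B (m - m1) \<partial>count_space UNIV) = A m1 * (\<integral>\<^sup>+ m. B m \<partial>count_space UNIV)" .
  qed
  also have "\<dots> = (\<integral>\<^sup>+ m1. A m1 \<partial>count_space UNIV) * (\<integral>\<^sup>+ m. B m \<partial>count_space UNIV)"
    by (rule nn_integral_multc) simp
  finally show ?thesis unfolding A_def B_def .
qed

lemma mixed_norm_sq_conv_le:
  fixes a b :: ennfun and sa sb :: "real \<Rightarrow> int \<times> int \<Rightarrow> bool" and M :: ennreal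
  assumes ma[measurable]: "\<And>m. (\<lambda>\<tau>. a \<tau> m) \<in> borel_measurable lborel"
    and mb[measurable]: "\<And>m. (\<lambda>\<tau>. b \<tau> m) \<in> borel_measurable lborel"
    and sa: "\<And>m. {\<tau>. sa \<tau> m} \<in> sets lborel"
    and sb: "\<And>m. {\<tau>. sb \<tau> m} \<in> sets lborel"
    and za: "\<And>\<tau> m. \<not> sa \<tau> m \<Longrightarrow> a \<tau> m = 0" and zb: "\<And>\<tau> m. \<not> sb \<tau> m \<Longrightarrow> b \<tau> m = 0"
    and bound: "\<And>\<tau> m. overlap sa sb \<tau> m \<le> M"
  shows "mixed_norm_sq (conv a b) \<le> M * (mixed_norm_sq a * mixed_norm_sq b)"
proof -
  have "mixed_norm_sq (conv a b)
      \<le> (\<integral>\<^sup>+ m. (\<integral>\<^sup>+ \<tau>. M * conv (\<lambda>t n. (a t n)^2) (\<lambda>t n. (b t n)^2) \<tau> m \<partial>lborel) \<partial>count_space UNIV)"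
    unfolding mixed_norm_sq_def by (intro nn_integral_mono power2_conv_le[OF ma mb sa sb za zb bound])
  also have "\<dots> = M * (\<integral>\<^sup>+ m. (\<integral>\<^sup>+ \<tau>. conv (\<lambda>t n. (a t n)^2) (\<lambda>t n. (b t n)^2) \<tau> m \<partial>lborel) \<partial>count_space UNIV)"
    by (subst nn_integral_cmult[symmetric], simp, intro nn_integral_cong nn_integral_cmult borel_measurable_conv) simp_all
  also have "\<dots> = M * (mixed_norm_sq a * mixed_norm_sq b)"
    unfolding mixed_norm_sq_def by (subst nn_integral_conv) (simp_all add: mult.assoc)
  finally show ?thesis .
qed

definition abs_ft :: "stfun \<Rightarrow> ennfun" where
  "abs_ft F \<tau> m = ennreal (cmod (F \<tau> m))"

lemma borel_measurable_abs_ft: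
  assumes "\<And>m. (\<lambda>\<tau>. F \<tau> m) \<in> borel_measurable lborel"
  shows "(\<lambda>\<tau>. abs_ft F \<tau> m) \<in> borel_measurable lborel"
  unfolding abs_ft_def using assms[of m] by measurable

lemma norm_infsum_le_nn_integral:
  fixes f :: "'a \<Rightarrow> complex"
  shows "ennreal (norm (infsum f A)) \<le> (\<integral>\<^sup>+ x. ennreal (norm (f x)) \<partial>count_space A)"
proof (cases "f summable_on A")
  case False then show ?thesis by (simp add: infsum_not_exists)
next
  case True
  then have "(\<lambda>x. norm (f x)) summable_on A" using summable_on_iff_abs_summable_on_complex by blast
  then have as: "Infinite_Set_Sum.abs_summable_on f A" using abs_summable_equivalent by blast
  have "norm (infsum f A) = norm (infsetsum f A)" using infsetsum_infsum[OF as] by simp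
  also have "\<dots> \<le> infsetsum (\<lambda>x. norm (f x)) A" by (rule norm_infsetsum_bound)
  finally have "ennreal (norm (infsum f A)) \<le> ennreal (infsetsum (\<lambda>x. norm (f x)) A)" by (rule ennreal_leI)
  also have "\<dots> = (\<integral>\<^sup>+ x. ennreal (norm (f x)) \<partial>count_space A)"
    by (rule nn_integral_conv_infsetsum[symmetric]) (use as in auto)
  finally show ?thesis .
qed

lemma norm_integral_le_nn_integral:
  fixes h :: "real \<Rightarrow> complex"
  shows "ennreal (norm (integral\<^sup>L lborel h)) \<le> (\<integral>\<^sup>+ x. ennreal (norm (h x)) \<partial>lborel)"
proof (cases "integrable lborel h")
  case True then show ?thesis by (rule integral_norm_bound_ennreal)
next
  case False then show ?thesis by (simp add: not_integrable_integral_eq)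
qed

definition plancherel_const :: "real \<Rightarrow> real \<Rightarrow> real" where
  "plancherel_const g1 g2 = 1 / (2 * pi * torus_vol g1 g2)"

lemma plancherel_const_pos: "g1 > 0 \<Longrightarrow> g2 > 0 \<Longrightarrow> plancherel_const g1 g2 > 0"
  by (simp add: plancherel_const_def torus_vol_def)

lemma abs_prod_ft_le:
  assumes "g1 > 0" "g2 > 0"
  shows "abs_ft (prod_ft g1 g2 F1 F2) \<tau> m \<le> ennreal (plancherel_const g1 g2) * conv (abs_ft F1) (abs_ft F2) \<tau> m"
proof -
  have c: "plancherel_const g1 g2 > 0" using plancherel_const_pos assms .
  have "abs_ft (prod_ft g1 g2 F1 F2) \<tau> m = ennreal (plancherel_const g1 g2) *
     ennreal (norm (\<Sum>\<^sub>\<infinity> m1. \<integral> \<tau>1. F1 \<tau>1 m1 * F2 (\<tau> - \<tau>1) (m - m1) \<partial>lborel))"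
    using c unfolding abs_ft_def prod_ft_def plancherel_const_def[symmetric]
    by (simp add: norm_mult ennreal_mult)
  also have "\<dots> \<le> ennreal (plancherel_const g1 g2) * (\<integral>\<^sup>+ m1. ennreal (norm (\<integral> \<tau>1. F1 \<tau>1 m1 * F2 (\<tau> - \<tau>1) (m - m1) \<partial>lborel)) \<partial>count_space UNIV)"
    by (intro mult_left_mono norm_infsum_le_nn_integral) simp
  also have "\<dots> \<le> ennreal (plancherel_const g1 g2) * conv (abs_ft F1) (abs_ft F2) \<tau> m"
    unfolding conv_def abs_ft_def
    by (intro mult_left_mono nn_integral_mono order_trans[OF norm_integral_le_nn_integral])
       (auto simp: norm_mult ennreal_mult)
  finally show ?thesis .
qed

lemma L2norm_eq_mixed_norm:
  assumes g: "g1 > 0" "g2 > 0" and mF: "\<And>m. (\<lambda>\<tau>. abs_ft F \<tau> m) \<in> borel_measurable lborel"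
  shows "L2norm g1 g2 F = ennreal (sqrt (plancherel_const g1 g2)) * mixed_norm (abs_ft F)"
proof -
  have "(\<integral>\<^sup>+ \<tau>. (\<integral>\<^sup>+ m. ennreal ((cmod (F \<tau> m))^2) \<partial>count_space UNIV) \<partial>lborel)
      = (\<integral>\<^sup>+ \<tau>. (\<integral>\<^sup>+ m. (abs_ft F \<tau> m)^2 \<partial>count_space UNIV) \<partial>lborel)"
    unfolding abs_ft_def by (simp add: ennreal_power)
  also have "\<dots> = mixed_norm_sq (abs_ft F)" unfolding mixed_norm_sq_def by (rule nn_integral_lborel_count_space_swap) (use mF in simp)
  finally show ?thesis
    unfolding L2norm_def mixed_norm_def plancherel_const_def[symmetric]
    using plancherel_const_pos[OF g] by (simp add: enn_sqrt_mult enn_sqrt_ennreal)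
qed

lemma L2norm_prod_ft_le:
  assumes g: "g1 > 0" "g2 > 0"
    and m1: "\<And>m. (\<lambda>\<tau>. F1 \<tau> m) \<in> borel_measurable lborel"
    and m2: "\<And>m. (\<lambda>\<tau>. F2 \<tau> m) \<in> borel_measurable lborel"
  shows "L2norm g1 g2 (prod_ft g1 g2 F1 F2) \<le> ennreal (sqrt (plancherel_const g1 g2))^3 * mixed_norm (conv (abs_ft F1) (abs_ft F2))"
proof -
  let ?c = "ennreal (plancherel_const g1 g2)"
  let ?C = "conv (abs_ft F1) (abs_ft F2)"
  have cm: "(\<lambda>\<tau>. ?C \<tau> m) \<in> borel_measurable lborel" for m
    by (rule borel_measurable_conv) (rule borel_measurable_abs_ft, fact)+
  have cm2[measurable]: "(\<lambda>\<tau>. (?C \<tau> m)^2) \<in> borel_measurable lborel" for m using cm[of m] by measurable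
  have "(\<integral>\<^sup>+ \<tau>. (\<integral>\<^sup>+ m. ennreal ((cmod (prod_ft g1 g2 F1 F2 \<tau> m))^2) \<partial>count_space UNIV) \<partial>lborel)
      = (\<integral>\<^sup>+ \<tau>. (\<integral>\<^sup>+ m. (abs_ft (prod_ft g1 g2 F1 F2) \<tau> m)^2 \<partial>count_space UNIV) \<partial>lborel)"
    unfolding abs_ft_def by (simp add: ennreal_power)
  also have "\<dots> \<le> (\<integral>\<^sup>+ \<tau>. (\<integral>\<^sup>+ m. ?c^2 * (?C \<tau> m)^2 \<partial>count_space UNIV) \<partial>lborel)"
    by (intro nn_integral_mono) (metis power_mono_ennreal abs_prod_ft_le[OF g] power_mult_distrib)
  also have "\<dots> = (\<integral>\<^sup>+ \<tau>. ?c^2 * (\<integral>\<^sup>+ m. (?C \<tau> m)^2 \<partial>count_space UNIV) \<partial>lborel)"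
    by (intro nn_integral_cong nn_integral_cmult) simp
  also have "\<dots> = ?c^2 * (\<integral>\<^sup>+ \<tau>. (\<integral>\<^sup>+ m. (?C \<tau> m)^2 \<partial>count_space UNIV) \<partial>lborel)"
    by (rule nn_integral_cmult) (rule borel_measurable_nn_integral_count_space, rule cm2)
  also have "\<dots> = ?c^2 * mixed_norm_sq ?C"
    unfolding mixed_norm_sq_def by (subst nn_integral_lborel_count_space_swap) (rule cm2, rule refl)
  finally have I: "(\<integral>\<^sup>+ \<tau>. (\<integral>\<^sup>+ m. ennreal ((cmod (prod_ft g1 g2 F1 F2 \<tau> m))^2) \<partial>count_space UNIV) \<partial>lborel) \<le> ?c^2 * mixed_norm_sq ?C" .
  have "L2norm g1 g2 (prod_ft g1 g2 F1 F2) \<le> enn_sqrt (?c * (?c^2 * mixed_norm_sq ?C))"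
    unfolding L2norm_def plancherel_const_def[symmetric] by (intro enn_sqrt_mono mult_left_mono I) simp
  also have "\<dots> = ennreal (sqrt (plancherel_const g1 g2))^3 * mixed_norm ?C"
    unfolding mixed_norm_def enn_sqrt_mult using plancherel_const_pos[OF g]
    by (simp add: power3_eq_cube power2_eq_square enn_sqrt_mult enn_sqrt_ennreal mult_ac)
  finally show ?thesis .
qed

lemma L2norm_zero: "(\<And>\<tau> m. F \<tau> m = 0) \<Longrightarrow> L2norm g1 g2 F = 0"
  unfolding L2norm_def enn_sqrt_def by simp

section \<open>Littlewood-Paley decomposition\<close>

lemma continuous_on_bump: "bump \<eta> \<Longrightarrow> continuous_on UNIV \<eta>"
proof -
  assume "bump \<eta>"
  then have "\<And>x. \<eta> differentiable (at x)"
    unfolding bump_def smooth_real_def by (metis funpow_0)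
  then show ?thesis
    by (simp add: continuous_at_imp_continuous_on differentiable_imp_continuous_within)
qed

lemma borel_measurable_bump: "bump \<eta> \<Longrightarrow> \<eta> \<in> borel_measurable borel"
  by (rule borel_measurable_continuous_onI, erule continuous_on_bump)

lemma borel_measurable_eta_dy: "bump \<eta> \<Longrightarrow> eta_dy \<eta> N \<in> borel_measurable borel"
  using borel_measurable_bump unfolding eta_dy_def[abs_def] by simp

lemma eta_dy_nonzero_upper:
  assumes "bump \<eta>" "N \<ge> 1" "eta_dy \<eta> N r \<noteq> 0"
  shows "\<bar>r\<bar> < 2 * N"
proof (cases "N = 1")
  case True
  then have "\<eta> r \<noteq> 0" using assms by (simp add: eta_dy_def)
  then show ?thesis using assms(1) True unfolding bump_def by auto
next
  case False
  then have "\<eta> (r / N) \<noteq> 0 \<or> \<eta> (2 * r / N) \<noteq> 0" using assms by (auto simp: eta_dy_def)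
  then have "\<bar>r / N\<bar> < 2 \<or> \<bar>2 * r / N\<bar> < 2" using assms(1) unfolding bump_def by blast
  then show ?thesis using assms(2) by (auto simp: abs_divide field_simps)
qed

lemma eta_dy_nonzero_lower:
  assumes "bump \<eta>" "N \<noteq> 1" "N > 0" "eta_dy \<eta> N r \<noteq> 0"
  shows "\<bar>r\<bar> > N / 2"
proof (rule ccontr)
  assume "\<not> \<bar>r\<bar> > N / 2"
  then have "\<bar>r / N\<bar> \<le> 1" "\<bar>2 * r / N\<bar> \<le> 1" using assms(3) by (auto simp: abs_divide field_simps)
  then have "\<eta> (r / N) = 1" "\<eta> (2 * r / N) = 1" using assms(1) unfolding bump_def by blast+
  then show False using assms by (simp add: eta_dy_def)
qed

lemma sum_eta_dy_telescope: "(\<Sum>j<Suc J. eta_dy \<eta> (2^j) r) = \<eta> (r / 2^J)"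
proof (induction J)
  case 0 then show ?case by (simp add: eta_dy_def)
next
  case (Suc J)
  have "(2::real) * 2^J \<noteq> 1" using one_le_power[of "2::real" J] by linarith
  then show ?case using Suc by (simp add: eta_dy_def field_simps)
qed

lemma sum_eta_dy_eq_1:
  assumes "bump \<eta>" "\<bar>r\<bar> \<le> 2^J"
  shows "(\<Sum>j<Suc J. eta_dy \<eta> (2^j) r) = 1"
proof -
  have "\<bar>r / 2^J\<bar> \<le> 1" using assms(2) by (simp add: abs_divide field_simps)
  then show ?thesis using assms(1) unfolding sum_eta_dy_telescope bump_def by blast
qed

lemma borel_measurable_abs_PS:
  assumes b: "bump \<eta>" and mF: "\<And>m. (\<lambda>\<tau>. F \<tau> m) \<in> borel_measurable lborel"
  shows "(\<lambda>\<tau>. abs_ft (PS g1 g2 \<eta> N L F) \<tau> m) \<in> borel_measurable lborel"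
proof -
  note [measurable] = borel_measurable_eta_dy[OF b]
  have [measurable]: "(\<lambda>\<tau>. F \<tau> m) \<in> borel_measurable borel" using mF[of m] by simp
  show ?thesis unfolding abs_ft_def PS_def by simp
qed

lemma sum_PS_eq:
  assumes b: "bump \<eta>" and J: "knorm g1 g2 m \<le> 2^J" and L: "\<bar>\<tau> + (knorm g1 g2 m)^2\<bar> \<le> 2^L"
  shows "(\<Sum>j<Suc J. \<Sum>l<Suc L. PS g1 g2 \<eta> (2^j) (2^l) F \<tau> m) = F \<tau> m"
proof -
  have "\<bar>knorm g1 g2 m\<bar> \<le> 2^J" using J by (simp add: knorm_def)
  then have "(\<Sum>j<Suc J. eta_dy \<eta> (2^j) (knorm g1 g2 m)) * (\<Sum>l<Suc L. eta_dy \<eta> (2^l) (\<tau> + (knorm g1 g2 m)^2)) = 1"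
    using sum_eta_dy_eq_1[OF b] L by simp
  moreover have "(\<Sum>j<Suc J. \<Sum>l<Suc L. PS g1 g2 \<eta> (2^j) (2^l) F \<tau> m)
    = complex_of_real ((\<Sum>j<Suc J. eta_dy \<eta> (2^j) (knorm g1 g2 m))
        * (\<Sum>l<Suc L. eta_dy \<eta> (2^l) (\<tau> + (knorm g1 g2 m)^2))) * F \<tau> m"
    unfolding PS_def of_real_mult of_real_sum sum_distrib_right sum_distrib_left mult.assoc by (rule sum.swap)
  ultimately show ?thesis by simp
qed

lemma abs_ft_le_sum_PS:
  assumes b: "bump \<eta>"
  shows "abs_ft F \<tau> m \<le> (\<Sum>j. \<Sum>l. abs_ft (PS g1 g2 \<eta> (2^j) (2^l) F) \<tau> m)"
proof -
  obtain J where J: "knorm g1 g2 m \<le> 2^J" using real_arch_pow[of 2 "knorm g1 g2 m"] by (auto intro: less_imp_le)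
  obtain L where L: "\<bar>\<tau> + (knorm g1 g2 m)^2\<bar> \<le> 2^L"
    using real_arch_pow[of 2 "\<bar>\<tau> + (knorm g1 g2 m)^2\<bar>"] by (auto intro: less_imp_le)
  have "norm (F \<tau> m) = norm (\<Sum>j<Suc J. \<Sum>l<Suc L. PS g1 g2 \<eta> (2^j) (2^l) F \<tau> m)"
    by (simp only: sum_PS_eq[OF b J L])
  also have "\<dots> \<le> (\<Sum>j<Suc J. norm (\<Sum>l<Suc L. PS g1 g2 \<eta> (2^j) (2^l) F \<tau> m))"
    by (rule norm_sum)
  also have "\<dots> \<le> (\<Sum>j<Suc J. \<Sum>l<Suc L. norm (PS g1 g2 \<eta> (2^j) (2^l) F \<tau> m))"
    by (intro sum_mono norm_sum)
  finally have "abs_ft F \<tau> m \<le> ennreal (\<Sum>j<Suc J. \<Sum>l<Suc L. norm (PS g1 g2 \<eta> (2^j) (2^l) F \<tau> m))"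
    unfolding abs_ft_def by (rule ennreal_leI)
  also have "\<dots> = (\<Sum>j<Suc J. \<Sum>l<Suc L. abs_ft (PS g1 g2 \<eta> (2^j) (2^l) F) \<tau> m)"
    unfolding abs_ft_def by (subst sum_ennreal, simp add: sum_nonneg)+ (rule refl)
  also have "\<dots> \<le> (\<Sum>j<Suc J. \<Sum>l. abs_ft (PS g1 g2 \<eta> (2^j) (2^l) F) \<tau> m)"
    by (intro sum_mono sum_le_suminf) auto
  also have "\<dots> \<le> (\<Sum>j. \<Sum>l. abs_ft (PS g1 g2 \<eta> (2^j) (2^l) F) \<tau> m)"
    by (intro sum_le_suminf) auto
  finally show ?thesis .
qed

lemma conv_abs_le_sum_PS:
  assumes b: "bump \<eta>"
    and m1: "\<And>m. (\<lambda>\<tau>. F1 \<tau> m) \<in> borel_measurable lborel"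
    and m2: "\<And>m. (\<lambda>\<tau>. F2 \<tau> m) \<in> borel_measurable lborel"
  shows "conv (abs_ft F1) (abs_ft F2) \<tau> m \<le> (\<Sum>j1. \<Sum>l1. \<Sum>j2. \<Sum>l2.
     conv (abs_ft (PS g1 g2 \<eta> (2^j1) (2^l1) F1)) (abs_ft (PS g1 g2 \<eta> (2^j2) (2^l2) F2)) \<tau> m)"
proof -
  define G1 where "G1 j l = abs_ft (PS g1 g2 \<eta> (2^j) (2^l) F1)" for j l :: nat
  define G2 where "G2 j l = abs_ft (PS g1 g2 \<eta> (2^j) (2^l) F2)" for j l :: nat
  have mG1[measurable]: "(\<lambda>\<tau>. G1 j l \<tau> m) \<in> borel_measurable lborel" for j l m
    unfolding G1_def by (rule borel_measurable_abs_PS[OF b m1])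
  have mG2[measurable]: "(\<lambda>\<tau>. G2 j l \<tau> m) \<in> borel_measurable lborel" for j l m
    unfolding G2_def by (rule borel_measurable_abs_PS[OF b m2])
  have "conv (abs_ft F1) (abs_ft F2) \<tau> m \<le> conv (\<lambda>t m. \<Sum>j. \<Sum>l. G1 j l t m) (\<lambda>t m. \<Sum>j. \<Sum>l. G2 j l t m) \<tau> m"
    unfolding G1_def G2_def by (intro conv_mono abs_ft_le_sum_PS[OF b])
  also have "\<dots> = (\<Sum>j1. conv (\<lambda>t m. \<Sum>l. G1 j1 l t m) (\<lambda>t m. \<Sum>j. \<Sum>l. G2 j l t m) \<tau> m)"
    by (rule conv_suminf_left) measurable
  also have "\<dots> = (\<Sum>j1. \<Sum>l1. conv (G1 j1 l1) (\<lambda>t m. \<Sum>j. \<Sum>l. G2 j l t m) \<tau> m)"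
    by (intro suminf_cong conv_suminf_left) measurable
  also have "\<dots> = (\<Sum>j1. \<Sum>l1. \<Sum>j2. conv (G1 j1 l1) (\<lambda>t m. \<Sum>l. G2 j2 l t m) \<tau> m)"
    by (intro suminf_cong conv_suminf_right) measurable
  also have "\<dots> = (\<Sum>j1. \<Sum>l1. \<Sum>j2. \<Sum>l2. conv (G1 j1 l1) (G2 j2 l2) \<tau> m)"
    by (intro suminf_cong conv_suminf_right) measurable
  finally show ?thesis unfolding G1_def G2_def .
qed

definition PS_region :: "real \<Rightarrow> real \<Rightarrow> real \<Rightarrow> real \<Rightarrow> real \<Rightarrow> int \<times> int \<Rightarrow> bool" where
  "PS_region g1 g2 N L t m \<longleftrightarrow> knorm g1 g2 m < 2 * N \<and> \<bar>t + (knorm g1 g2 m)^2\<bar> < 2 * L"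

lemma abs_PS_outside_region:
  assumes b: "bump \<eta>" and "\<not> PS_region g1 g2 (2^j) (2^l) \<tau> m"
  shows "abs_ft (PS g1 g2 \<eta> (2^j) (2^l) F) \<tau> m = 0"
proof (rule ccontr)
  assume "abs_ft (PS g1 g2 \<eta> (2^j) (2^l) F) \<tau> m \<noteq> 0"
  then have h: "eta_dy \<eta> (2^j) (knorm g1 g2 m) \<noteq> 0" "eta_dy \<eta> (2^l) (\<tau> + (knorm g1 g2 m)^2) \<noteq> 0"
    unfolding abs_ft_def PS_def by auto
  have "\<bar>knorm g1 g2 m\<bar> < 2 * 2^j" by (rule eta_dy_nonzero_upper[OF b _ h(1)]) simp
  moreover have "\<bar>\<tau> + (knorm g1 g2 m)^2\<bar> < 2 * 2^l" by (rule eta_dy_nonzero_upper[OF b _ h(2)]) simp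
  ultimately have "PS_region g1 g2 (2^j) (2^l) \<tau> m" unfolding PS_region_def by auto
  with assms(2) show False by simp
qed

lemma sets_PS_region: "{\<tau>. PS_region g1 g2 N L \<tau> m} \<in> sets lborel"
  unfolding PS_region_def by measurable

lemma eta_dy_dyadic_window:
  assumes b: "bump \<eta>" and inP: "in_PN g1 g2 (2^a) m" and ne: "eta_dy \<eta> (2^j) (knorm g1 g2 m) \<noteq> 0"
  shows "j \<in> {a - 1, a, a + 1}"
proof -
  define k where "k = knorm g1 g2 m"
  have pow2_less: "(2::real)^p < 2^q \<longleftrightarrow> p < q" for p q :: nat by (rule power_strict_increasing_iff) simp
  have k0: "k \<ge> 0" unfolding k_def knorm_def by simp
  have up_j: "k < 2 * 2^j" using eta_dy_nonzero_upper[OF b _ ne] k0 unfolding k_def by simp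
  have up_a: "k \<le> 2 * 2^a" using inP unfolding in_PN_def k_def by (auto split: if_splits)
  have "a < j + 2"
  proof (cases "a = 0")
    case False
    then have "(1::real) < 2^a" by (intro one_less_power) auto
    then have "(2::real)^a \<noteq> 1" by simp
    then have "2^a / 2 \<le> k" using inP unfolding in_PN_def k_def by simp
    with up_j have "(2::real)^a < 2^(j+2)" by (simp add: power_add)
    then show ?thesis using pow2_less by blast
  qed simp
  moreover have "j < a + 2"
  proof (cases "j = 0")
    case False
    then have "(1::real) < 2^j" by (intro one_less_power) auto
    then have "(2::real)^j \<noteq> 1" by simp
    then have "2^j / 2 < k" using eta_dy_nonzero_lower[OF b _ _ ne] k0 unfolding k_def by simp
    with up_a have "(2::real)^j < 2^(a+2)" by (simp add: power_add)
    then show ?thesis using pow2_less by blast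
  qed simp
  ultimately show ?thesis by auto
qed

definition XS1_row :: "real \<Rightarrow> real \<Rightarrow> (real \<Rightarrow> real) \<Rightarrow> real \<Rightarrow> real \<Rightarrow> stfun \<Rightarrow> nat \<Rightarrow> ennreal" where
  "XS1_row g1 g2 \<eta> s bb F j = (\<Sum>l. ennreal ((2 ^ j) powr s * (2 ^ l) powr bb) * L2norm g1 g2 (PS g1 g2 \<eta> (2 ^ j) (2 ^ l) F))"

lemma XS1_eq_rows: "XS1 g1 g2 \<eta> s bb F = enn_sqrt (\<Sum>j. (XS1_row g1 g2 \<eta> s bb F j)^2)"
  unfolding XS1_def XS1_row_def ..

lemma suminf_XS1_row_le:
  assumes b: "bump \<eta>" and d: "dyadic N" and sup: "supp_in_PN g1 g2 N F"
  shows "(\<Sum>j. XS1_row g1 g2 \<eta> s bb F j) \<le> 3 * XS1 g1 g2 \<eta> s bb F"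
proof -
  obtain a where a: "N = 2^a" using d unfolding dyadic_def by auto
  define W where "W = {a - 1, a, a + 1}"
  have z: "XS1_row g1 g2 \<eta> s bb F j = 0" if "j \<notin> W" for j
  proof -
    have "PS g1 g2 \<eta> (2 ^ j) (2 ^ l) F \<tau> m = 0" for l \<tau> m
    proof (cases "F \<tau> m = 0")
      case False
      then have "in_PN g1 g2 (2^a) m" using sup a unfolding supp_in_PN_def by blast
      then have "eta_dy \<eta> (2^j) (knorm g1 g2 m) = 0" using eta_dy_dyadic_window[OF b] that unfolding W_def by blast
      then show ?thesis unfolding PS_def by simp
    qed (simp add: PS_def)
    then show ?thesis unfolding XS1_row_def by (simp add: L2norm_zero)
  qed
  have "(\<Sum>j. XS1_row g1 g2 \<eta> s bb F j) = (\<Sum>j\<in>W. XS1_row g1 g2 \<eta> s bb F j)"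
    by (rule suminf_finite) (auto simp: W_def z)
  also have "\<dots> \<le> (\<Sum>j\<in>W. XS1 g1 g2 \<eta> s bb F)"
  proof (rule sum_mono)
    fix j
    have "(XS1_row g1 g2 \<eta> s bb F j)^2 \<le> (\<Sum>j. (XS1_row g1 g2 \<eta> s bb F j)^2)"
      using sum_le_suminf[of "\<lambda>j. (XS1_row g1 g2 \<eta> s bb F j)^2" "{j}"] by simp
    then show "XS1_row g1 g2 \<eta> s bb F j \<le> XS1 g1 g2 \<eta> s bb F"
      unfolding XS1_eq_rows by (metis enn_sqrt_mono enn_sqrt_power2)
  qed
  also have "\<dots> = of_nat (card W) * XS1 g1 g2 \<eta> s bb F" by simp
  also have "\<dots> \<le> 3 * XS1 g1 g2 \<eta> s bb F"
  proof (rule mult_right_mono)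
    have "card W \<le> 3" unfolding W_def by (simp add: card_insert_if)
    then show "of_nat (card W) \<le> (3::ennreal)" by (metis numeral_eq_of_nat of_nat_le_iff)
  qed simp
  finally show ?thesis .
qed

section \<open>Counting lattice points\<close>

lemma int_interval_subset:
  fixes g x y :: real
  assumes "g > 0"
  shows "{b::int. x \<le> b / g \<and> b / g \<le> y} \<subseteq> {\<lceil>g * x\<rceil> .. \<lfloor>g * y\<rfloor>}"
proof
  fix b :: int assume "b \<in> {b::int. x \<le> b / g \<and> b / g \<le> y}"
  then have "g * x \<le> b" "b \<le> g * y" using assms by (auto simp: field_simps)
  then show "b \<in> {\<lceil>g * x\<rceil> .. \<lfloor>g * y\<rfloor>}" by (simp add: ceiling_le_iff le_floor_iff)
qed

lemma finite_int_interval: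
  fixes g x y :: real
  assumes "g > 0"
  shows "finite {b::int. x \<le> b / g \<and> b / g \<le> y}"
  by (rule finite_subset[OF int_interval_subset[OF assms]]) simp

lemma card_int_interval_le:
  fixes g x y :: real
  assumes g: "g > 0"
  shows "real (card {b::int. x \<le> b / g \<and> b / g \<le> y}) \<le> g * max 0 (y - x) + 1"
proof -
  have "card {b::int. x \<le> b / g \<and> b / g \<le> y} \<le> nat (\<lfloor>g * y\<rfloor> - \<lceil>g * x\<rceil> + 1)"
    using card_mono[OF _ int_interval_subset[OF g]] by simp
  moreover have "real (nat (\<lfloor>g * y\<rfloor> - \<lceil>g * x\<rceil> + 1)) \<le> g * max 0 (y - x) + 1"
  proof (cases "\<lfloor>g * y\<rfloor> - \<lceil>g * x\<rceil> + 1 \<le> 0")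
    case False
    then have "real (nat (\<lfloor>g * y\<rfloor> - \<lceil>g * x\<rceil> + 1)) = \<lfloor>g * y\<rfloor> - \<lceil>g * x\<rceil> + 1" by simp
    also have "\<dots> \<le> g * y - g * x + 1"
      using of_int_floor_le[of "g*y"] le_of_int_ceiling[of "g*x"] by linarith
    also have "\<dots> \<le> g * max 0 (y - x) + 1"
      using g by (simp add: max_def right_diff_distrib mult_le_0_iff)
    finally show ?thesis .
  qed (use g in simp)
  ultimately show ?thesis by linarith
qed

lemma int_ball_finite_card_le:
  fixes g c \<rho> :: real
  assumes g: "g > 0" and \<rho>: "0 \<le> \<rho>" and A: "A \<subseteq> {a::int. \<bar>a/g - c\<bar> \<le> \<rho>}"
  shows "finite A" and "real (card A) \<le> 2 * g * \<rho> + 1"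
proof -
  have sub: "A \<subseteq> {a::int. c - \<rho> \<le> a/g \<and> a/g \<le> c + \<rho>}" using A by (auto simp: abs_le_iff)
  show "finite A" by (rule finite_subset[OF sub finite_int_interval[OF g]])
  have "real (card A) \<le> real (card {a::int. c - \<rho> \<le> a/g \<and> a/g \<le> c + \<rho>})"
    using card_mono[OF finite_int_interval[OF g] sub] by simp
  also have "\<dots> \<le> g * max 0 (c + \<rho> - (c - \<rho>)) + 1" by (rule card_int_interval_le[OF g])
  also have "\<dots> = 2 * g * \<rho> + 1" using \<rho> by (simp add: max_def)
  finally show "real (card A) \<le> 2 * g * \<rho> + 1" .
qed

lemma sqrt_add_diff_antimono:
  fixes s \<beta> l :: real
  assumes "0 \<le> \<beta>" "\<beta> \<le> s" "0 \<le> l"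
  shows "sqrt (s + l) - sqrt s \<le> sqrt (\<beta> + l) - sqrt \<beta>"
proof -
  have "\<beta> * l \<le> s * l" by (rule mult_right_mono) (use assms in auto)
  then have "(s + l) * \<beta> \<le> (\<beta> + l) * s" by (simp add: algebra_simps)
  then have m: "sqrt (s + l) * sqrt \<beta> \<le> sqrt (\<beta> + l) * sqrt s"
    by (simp add: real_sqrt_mult[symmetric])
  have "(sqrt (s + l) + sqrt \<beta>)^2 \<le> (sqrt (\<beta> + l) + sqrt s)^2"
    using assms m by (simp add: power2_sum algebra_simps)
  then have "sqrt (s + l) + sqrt \<beta> \<le> sqrt (\<beta> + l) + sqrt s"
    by (rule power2_le_imp_le) (use assms in simp)
  then show ?thesis by simp
qed

lemma sqrt_add_diff_bounds:
  fixes \<beta> l :: real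
  assumes "0 \<le> \<beta>" "0 \<le> l"
  shows "0 \<le> sqrt (\<beta> + l) - sqrt \<beta>"
    and "(sqrt (\<beta> + l) - sqrt \<beta>) * sqrt (\<beta> + l) \<le> l"
    and "sqrt (\<beta> + l) - sqrt \<beta> \<le> l + 1"
proof -
  show "0 \<le> sqrt (\<beta> + l) - sqrt \<beta>" using assms by simp
  have "sqrt \<beta> * sqrt \<beta> \<le> sqrt \<beta> * sqrt (\<beta> + l)" using assms by (intro mult_left_mono) auto
  then show "(sqrt (\<beta> + l) - sqrt \<beta>) * sqrt (\<beta> + l) \<le> l" using assms
    by (simp add: algebra_simps)
  have "sqrt (\<beta> + l) \<le> sqrt \<beta> + sqrt l" using assms by (rule sqrt_add_le_add_sqrt)
  moreover have "sqrt l \<le> l + 1"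
  proof -
    have "0 \<le> (sqrt l - 1)^2" by simp
    then have "0 \<le> (sqrt l)^2 - 2 * sqrt l + 1" by (simp add: power2_diff)
    then show ?thesis using assms by simp
  qed
  ultimately show "sqrt (\<beta> + l) - sqrt \<beta> \<le> l + 1" by linarith
qed

lemma int_shell_subset:
  fixes g c \<sigma>0 l \<beta> :: real
  shows "{b::int. \<sigma>0 < (b/g - c)^2 \<and> (b/g - c)^2 < \<sigma>0 + l \<and> \<beta> \<le> (b/g - c)^2}
    \<subseteq> {b. c + sqrt (max \<sigma>0 \<beta>) \<le> b/g \<and> b/g \<le> c + sqrt (\<sigma>0 + l)}
      \<union> {b. c - sqrt (\<sigma>0 + l) \<le> b/g \<and> b/g \<le> c - sqrt (max \<sigma>0 \<beta>)}"
proof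
  fix b :: int
  assume "b \<in> {b::int. \<sigma>0 < (b/g - c)^2 \<and> (b/g - c)^2 < \<sigma>0 + l \<and> \<beta> \<le> (b/g - c)^2}"
  then have h: "max \<sigma>0 \<beta> \<le> (b/g - c)^2" "(b/g - c)^2 \<le> \<sigma>0 + l" by auto
  have "sqrt (max \<sigma>0 \<beta>) \<le> \<bar>b/g - c\<bar>" "\<bar>b/g - c\<bar> \<le> sqrt (\<sigma>0 + l)"
    using real_sqrt_le_mono[OF h(1)] real_sqrt_le_mono[OF h(2)] by simp_all
  then show "b \<in> {b. c + sqrt (max \<sigma>0 \<beta>) \<le> b/g \<and> b/g \<le> c + sqrt (\<sigma>0 + l)}
      \<union> {b. c - sqrt (\<sigma>0 + l) \<le> b/g \<and> b/g \<le> c - sqrt (max \<sigma>0 \<beta>)}"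
    by (cases "b/g - c \<ge> 0") auto
qed

lemma finite_int_shell:
  fixes g c \<sigma>0 l \<beta> :: real
  assumes "g > 0"
  shows "finite {b::int. \<sigma>0 < (b/g - c)^2 \<and> (b/g - c)^2 < \<sigma>0 + l \<and> \<beta> \<le> (b/g - c)^2}"
  by (rule finite_subset[OF int_shell_subset]) (simp add: finite_int_interval[OF assms])

lemma card_int_shell_le:
  fixes g c \<sigma>0 l \<beta> :: real
  assumes g: "g > 0" and b0: "0 \<le> \<beta>" and l0: "0 \<le> l"
  shows "real (card {b::int. \<sigma>0 < (b/g - c)^2 \<and> (b/g - c)^2 < \<sigma>0 + l \<and> \<beta> \<le> (b/g - c)^2})
     \<le> 2 * (g * (sqrt (\<beta> + l) - sqrt \<beta>) + 1)"
proof -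
  define s where "s = max \<sigma>0 \<beta>"
  define U1 where "U1 = {b::int. c + sqrt s \<le> b/g \<and> b/g \<le> c + sqrt (\<sigma>0 + l)}"
  define U2 where "U2 = {b::int. c - sqrt (\<sigma>0 + l) \<le> b/g \<and> b/g \<le> c - sqrt s}"
  have width: "max 0 (sqrt (\<sigma>0 + l) - sqrt s) \<le> sqrt (\<beta> + l) - sqrt \<beta>"
  proof -
    have "sqrt (\<sigma>0 + l) \<le> sqrt (s + l)" by (simp add: s_def)
    moreover have "sqrt (s + l) - sqrt s \<le> sqrt (\<beta> + l) - sqrt \<beta>"
      by (rule sqrt_add_diff_antimono) (use b0 l0 in \<open>auto simp: s_def\<close>)
    ultimately show ?thesis by (intro max.boundedI) (use b0 l0 in simp, linarith)
  qed
  have "card {b::int. \<sigma>0 < (b/g - c)^2 \<and> (b/g - c)^2 < \<sigma>0 + l \<and> \<beta> \<le> (b/g - c)^2} \<le> card (U1 \<union> U2)"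
    unfolding U1_def U2_def s_def
    by (rule card_mono[OF _ int_shell_subset]) (simp add: finite_int_interval[OF g])
  then have "real (card {b::int. \<sigma>0 < (b/g - c)^2 \<and> (b/g - c)^2 < \<sigma>0 + l \<and> \<beta> \<le> (b/g - c)^2})
      \<le> real (card U1) + real (card U2)"
    using card_Un_le[of U1 U2] by linarith
  also have "\<dots> \<le> (g * (sqrt (\<beta> + l) - sqrt \<beta>) + 1) + (g * (sqrt (\<beta> + l) - sqrt \<beta>) + 1)"
  proof (rule add_mono)
    have "g * max 0 (sqrt (\<sigma>0 + l) - sqrt s) + 1 \<le> g * (sqrt (\<beta> + l) - sqrt \<beta>) + 1"
      using width g by simp
    then show "real (card U1) \<le> g * (sqrt (\<beta> + l) - sqrt \<beta>) + 1"
      and "real (card U2) \<le> g * (sqrt (\<beta> + l) - sqrt \<beta>) + 1"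
      using card_int_interval_le[OF g, of "c + sqrt s" "c + sqrt (\<sigma>0 + l)"]
        card_int_interval_le[OF g, of "c - sqrt (\<sigma>0 + l)" "c - sqrt s"]
      unfolding U1_def U2_def by simp_all
  qed
  finally show ?thesis by simp
qed

lemma card_Sigma_le:
  assumes "finite A" "\<And>a. finite (B a)" "\<And>a. real (card (B a)) \<le> c"
  shows "real (card (Sigma A B)) \<le> real (card A) * c"
proof -
  have "real (card (Sigma A B)) = (\<Sum>a\<in>A. real (card (B a)))"
    using assms(1,2) by (simp add: card_SigmaI)
  also have "\<dots> \<le> (\<Sum>a\<in>A. c)" by (intro sum_mono assms(3))
  finally show ?thesis by simp
qed

text \<open>On the sector, each fibre in the second coordinate consists of two intervals of length at most
  \<Lambda> = sqrt (\<beta> + l) - sqrt \<beta> with \<beta> \<ge> \<alpha>/2, while the first coordinate ranges over an interval of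
  length O(sqrt (\<beta> + l)); the main term is thus governed by \<Lambda> * sqrt (\<beta> + l) \<le> l.\<close>
lemma card_annulus_sector_le:
  fixes g1 g2 c1 c2 d1 r \<alpha> l :: real
  assumes g1: "g1 > 0" and g2: "g2 > 0" and l0: "l \<ge> 0" and r0: "r \<ge> 0"
  shows "finite {(a::int,b::int). \<bar>a/g1 - d1\<bar> < r \<and> \<alpha> < (a/g1-c1)^2 + (b/g2-c2)^2
     \<and> (a/g1-c1)^2 + (b/g2-c2)^2 < \<alpha> + l \<and> (a/g1-c1)^2 \<le> (b/g2-c2)^2}
    \<and> real (card {(a::int,b::int). \<bar>a/g1 - d1\<bar> < r \<and> \<alpha> < (a/g1-c1)^2 + (b/g2-c2)^2
     \<and> (a/g1-c1)^2 + (b/g2-c2)^2 < \<alpha> + l \<and> (a/g1-c1)^2 \<le> (b/g2-c2)^2})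
    \<le> 4*g1*g2*l + 2*g2*(l+1) + 4*g1*r + 2"
proof -
  define \<beta> where "\<beta> = max (\<alpha>/2) 0"
  define \<Lambda> where "\<Lambda> = sqrt (\<beta> + l) - sqrt \<beta>"
  define A where "A = {a::int. \<bar>a/g1 - d1\<bar> < r \<and> (a/g1 - c1)^2 < \<beta> + l}"
  define fib where "fib a = {b::int. \<alpha> - (a/g1-c1)^2 < (b/g2 - c2)^2 \<and> (b/g2 - c2)^2 < (\<alpha> - (a/g1-c1)^2) + l
                   \<and> \<beta> \<le> (b/g2 - c2)^2}" for a :: int
  define T where "T = {(a::int,b::int). \<bar>a/g1 - d1\<bar> < r \<and> \<alpha> < (a/g1-c1)^2 + (b/g2-c2)^2
     \<and> (a/g1-c1)^2 + (b/g2-c2)^2 < \<alpha> + l \<and> (a/g1-c1)^2 \<le> (b/g2-c2)^2}"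
  have b0: "0 \<le> \<beta>" unfolding \<beta>_def by simp
  have L: "0 \<le> \<Lambda>" "\<Lambda> * sqrt (\<beta> + l) \<le> l" "\<Lambda> \<le> l + 1"
    unfolding \<Lambda>_def using sqrt_add_diff_bounds[OF b0 l0] by auto
  have sub: "T \<subseteq> Sigma A fib"
  proof
    fix p assume "p \<in> T"
    then obtain a b where p: "p = (a,b)" and h: "\<bar>a/g1 - d1\<bar> < r" "\<alpha> < (a/g1-c1)^2 + (b/g2-c2)^2"
      "(a/g1-c1)^2 + (b/g2-c2)^2 < \<alpha> + l" "(a/g1-c1)^2 \<le> (b/g2-c2)^2" unfolding T_def by auto
    have "(a/g1 - c1)^2 < \<beta> + l" using h l0 unfolding \<beta>_def by (auto simp: max_def)
    then have "a \<in> A" using h unfolding A_def by auto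
    moreover have "\<beta> \<le> (b/g2 - c2)^2" using h unfolding \<beta>_def by (auto simp: max_def)
    then have "b \<in> fib a" using h unfolding fib_def by auto
    ultimately show "p \<in> Sigma A fib" using p by auto
  qed
  have A_ball: "A \<subseteq> {a::int. \<bar>a/g1 - d1\<bar> \<le> r}" unfolding A_def by auto
  have Afin: "finite A" by (rule int_ball_finite_card_le(1)[OF g1 r0 A_ball])
  have fibfin: "finite (fib a)" for a unfolding fib_def by (rule finite_int_shell[OF g2])
  have "real (card T) \<le> real (card (Sigma A fib))"
    by (intro of_nat_mono card_mono[OF _ sub]) (use Afin fibfin in auto)
  also have "\<dots> \<le> real (card A) * (2 * (g2 * \<Lambda> + 1))"
    using Afin fibfin card_int_shell_le[OF g2 b0 l0] unfolding fib_def \<Lambda>_def by (rule card_Sigma_le)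
  finally have cT: "real (card T) \<le> 2 * g2 * \<Lambda> * real (card A) + 2 * real (card A)"
    by (simp add: algebra_simps)
  have cA1: "real (card A) \<le> 2 * g1 * sqrt (\<beta> + l) + 1"
  proof (rule int_ball_finite_card_le(2)[OF g1])
    show "A \<subseteq> {a::int. \<bar>a/g1 - c1\<bar> \<le> sqrt (\<beta> + l)}"
    proof
      fix a assume "a \<in> A"
      then have "(a/g1 - c1)^2 \<le> \<beta> + l" unfolding A_def by auto
      then show "a \<in> {a::int. \<bar>a/g1 - c1\<bar> \<le> sqrt (\<beta> + l)}"
        by (metis mem_Collect_eq real_sqrt_abs real_sqrt_le_mono)
    qed
  qed (use b0 l0 in simp)
  have cA2: "real (card A) \<le> 2 * g1 * r + 1" by (rule int_ball_finite_card_le(2)[OF g1 r0 A_ball])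
  have "2 * g2 * \<Lambda> * real (card A) \<le> 2 * g2 * \<Lambda> * (2 * g1 * sqrt (\<beta> + l) + 1)"
    using g2 L cA1 by (intro mult_left_mono) auto
  also have "\<dots> = 4 * g1 * g2 * (\<Lambda> * sqrt (\<beta> + l)) + 2 * g2 * \<Lambda>" by (simp add: algebra_simps)
  also have "\<dots> \<le> 4 * g1 * g2 * l + 2 * g2 * (l + 1)"
    using g1 g2 L by (intro add_mono mult_left_mono) auto
  finally have "2 * g2 * \<Lambda> * real (card A) \<le> 4 * g1 * g2 * l + 2 * g2 * (l + 1)" .
  with cT cA2 have "real (card T) \<le> 4*g1*g2*l + 2*g2*(l+1) + 4*g1*r + 2" by linarith
  moreover have "finite T" by (rule finite_subset[OF sub]) (use Afin fibfin in auto)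
  ultimately show ?thesis unfolding T_def by blast
qed

text \<open>If the k1-piece is supported where \<bar>\<tau>1 + |k1|^2\<bar> < 2 L1 and the (k - k1)-piece where
  \<bar>\<tau> - \<tau>1 + |k - k1|^2\<bar> < 2 L2, then k1 lies in this set with l0 = 2 (L1 + L2).\<close>
definition resonant_set :: "real \<Rightarrow> real \<Rightarrow> real \<Rightarrow> real \<Rightarrow> real \<Rightarrow> int \<times> int \<Rightarrow> (int \<times> int) set" where
  "resonant_set g1 g2 N2 l0 \<tau> m = {m1. knorm g1 g2 (m - m1) < 2 * N2 \<and>
      \<bar>\<tau> + (knorm g1 g2 m1)^2 + (knorm g1 g2 (m - m1))^2\<bar> < l0}"

lemma knorm_sq: "(knorm g1 g2 m)^2 = (of_int (fst m) / g1)^2 + (of_int (snd m) / g2)^2"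
  unfolding knorm_def by simp

lemma abs_fst_le_knorm: "\<bar>of_int (fst m) / g1\<bar> \<le> knorm g1 g2 m"
  unfolding knorm_def by (metis real_sqrt_abs real_sqrt_le_mono le_add_same_cancel1 zero_le_power2)

lemma abs_snd_le_knorm: "\<bar>of_int (snd m) / g2\<bar> \<le> knorm g1 g2 m"
  unfolding knorm_def by (metis real_sqrt_abs real_sqrt_le_mono le_add_same_cancel2 zero_le_power2)

lemma knorm_parallelogram:
  assumes "g1 > 0" "g2 > 0"
  shows "(knorm g1 g2 m1)^2 + (knorm g1 g2 (m - m1))^2
    = 2 * ((of_int (fst m1) / g1 - of_int (fst m) / (2*g1))^2 + (of_int (snd m1) / g2 - of_int (snd m) / (2*g2))^2)
      + (knorm g1 g2 m)^2 / 2"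
  unfolding knorm_sq using assms by (simp add: field_simps power2_eq_square)

lemma resonant_set_ball:
  assumes "m1 \<in> resonant_set g1 g2 N2 l0 \<tau> m"
  shows "\<bar>of_int (fst m1) / g1 - of_int (fst m) / g1\<bar> < 2 * N2"
    and "\<bar>of_int (snd m1) / g2 - of_int (snd m) / g2\<bar> < 2 * N2"
proof -
  have k: "knorm g1 g2 (m - m1) < 2 * N2" using assms unfolding resonant_set_def by auto
  have "\<bar>of_int (fst (m - m1)) / g1\<bar> < 2 * N2" using abs_fst_le_knorm[of "m - m1" g1 g2] k by linarith
  then show "\<bar>of_int (fst m1) / g1 - of_int (fst m) / g1\<bar> < 2 * N2"
    by (simp add: diff_divide_distrib abs_minus_commute)
  have "\<bar>of_int (snd (m - m1)) / g2\<bar> < 2 * N2" using abs_snd_le_knorm[of "m - m1" g2 g1] k by linarith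
  then show "\<bar>of_int (snd m1) / g2 - of_int (snd m) / g2\<bar> < 2 * N2"
    by (simp add: diff_divide_distrib abs_minus_commute)
qed

lemma card_resonant_set_ball:
  assumes g1: "g1 > 0" and g2: "g2 > 0" and N: "N2 \<ge> 0"
  shows "finite (resonant_set g1 g2 N2 l0 \<tau> m) \<and> real (card (resonant_set g1 g2 N2 l0 \<tau> m)) \<le> (4*g1*N2 + 1) * (4*g2*N2 + 1)"
proof -
  define A where "A = {a::int. \<bar>a/g1 - of_int (fst m) / g1\<bar> \<le> 2*N2}"
  define B where "B = {b::int. \<bar>b/g2 - of_int (snd m) / g2\<bar> \<le> 2*N2}"
  have sub: "resonant_set g1 g2 N2 l0 \<tau> m \<subseteq> A \<times> B"
  proof
    fix m1 assume h: "m1 \<in> resonant_set g1 g2 N2 l0 \<tau> m"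
    show "m1 \<in> A \<times> B" using resonant_set_ball[OF h] unfolding A_def B_def by (cases m1) auto
  qed
  have N': "0 \<le> 2 * N2" using N by simp
  have fA: "finite A" and fB: "finite B"
    unfolding A_def B_def by (intro int_ball_finite_card_le(1)[OF _ N' subset_refl] g1 g2)+
  have cA: "real (card A) \<le> 4*g1*N2 + 1"
    using int_ball_finite_card_le(2)[OF g1 N' subset_refl] unfolding A_def by (simp add: mult.assoc)
  have cB: "real (card B) \<le> 4*g2*N2 + 1"
    using int_ball_finite_card_le(2)[OF g2 N' subset_refl] unfolding B_def by (simp add: mult.assoc)
  have "card (resonant_set g1 g2 N2 l0 \<tau> m) \<le> card (A \<times> B)" by (rule card_mono[OF _ sub]) (use fA fB in simp)
  then have "card (resonant_set g1 g2 N2 l0 \<tau> m) \<le> card A * card B" by (simp add: card_cartesian_product)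
  then have "real (card (resonant_set g1 g2 N2 l0 \<tau> m)) \<le> real (card A) * real (card B)"
    by (simp only: of_nat_mult[symmetric] of_nat_le_iff)
  also have "\<dots> \<le> (4*g1*N2 + 1) * (4*g2*N2 + 1)" using cA cB by (intro mult_mono) auto
  finally show ?thesis using finite_subset[OF sub] fA fB by auto
qed

text \<open>By the parallelogram identity the resonant set lies in an annulus centred at k/2 whose squared
  radii range over an interval of length l0/2; it is split into the two sectors where one coordinate
  dominates the other.\<close>
lemma card_resonant_set_annulus:
  assumes g1: "g1 > 0" and g2: "g2 > 0" and N: "N2 \<ge> 0" and l0: "l0 \<ge> 0"
  shows "real (card (resonant_set g1 g2 N2 l0 \<tau> m)) \<le> 8*g1*g2*l0 + 2*(g1+g2)*(l0+1) + 8*(g1+g2)*N2 + 4"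
proof -
  obtain p q where m: "m = (p, q)" by (cases m)
  define c1 where "c1 = of_int p / (2*g1)"
  define c2 where "c2 = of_int q / (2*g2)"
  define K0 where "K0 = (knorm g1 g2 m)^2 / 2"
  define \<alpha> where "\<alpha> = (- \<tau> - K0 - l0) / 2"
  define r where "r = 2 * N2"
  define H1 where "H1 = {(a::int,b::int). \<bar>a/g1 - of_int p / g1\<bar> < r \<and> \<alpha> < (a/g1-c1)^2 + (b/g2-c2)^2
     \<and> (a/g1-c1)^2 + (b/g2-c2)^2 < \<alpha> + l0 \<and> (a/g1-c1)^2 \<le> (b/g2-c2)^2}"
  define H2 where "H2 = {(a::int,b::int). \<bar>a/g2 - of_int q / g2\<bar> < r \<and> \<alpha> < (a/g2-c2)^2 + (b/g1-c1)^2
     \<and> (a/g2-c2)^2 + (b/g1-c1)^2 < \<alpha> + l0 \<and> (a/g2-c2)^2 \<le> (b/g1-c1)^2}"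
  have r0: "r \<ge> 0" using N unfolding r_def by simp
  from card_annulus_sector_le[OF g1 g2 l0 r0, of "of_int p / g1" \<alpha> c1 c2]
  have h1: "finite H1" "real (card H1) \<le> 4*g1*g2*l0 + 2*g2*(l0+1) + 4*g1*r + 2" unfolding H1_def by auto
  from card_annulus_sector_le[OF g2 g1 l0 r0, of "of_int q / g2" \<alpha> c2 c1]
  have h2: "finite H2" "real (card H2) \<le> 4*g2*g1*l0 + 2*g1*(l0+1) + 4*g2*r + 2" unfolding H2_def by auto
  have sub: "resonant_set g1 g2 N2 l0 \<tau> m \<subseteq> H1 \<union> prod.swap ` H2"
  proof
    fix m1 assume h: "m1 \<in> resonant_set g1 g2 N2 l0 \<tau> m"
    obtain a b where m1: "m1 = (a, b)" by (cases m1)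
    have ball: "\<bar>a/g1 - of_int p / g1\<bar> < r" "\<bar>b/g2 - of_int q / g2\<bar> < r"
      using resonant_set_ball[OF h] m m1 unfolding r_def by auto
    have id: "(knorm g1 g2 m1)^2 + (knorm g1 g2 (m - m1))^2 = 2 * ((a/g1-c1)^2 + (b/g2-c2)^2) + K0"
      using knorm_parallelogram[OF g1 g2, of m1 m] unfolding m m1 c1_def c2_def K0_def by simp
    have "\<bar>\<tau> + (knorm g1 g2 m1)^2 + (knorm g1 g2 (m - m1))^2\<bar> < l0" using h unfolding resonant_set_def by auto
    then have "\<bar>\<tau> + (2 * ((a/g1-c1)^2 + (b/g2-c2)^2) + K0)\<bar> < l0" using id by (simp add: add.assoc)
    then have ann: "\<alpha> < (a/g1-c1)^2 + (b/g2-c2)^2" "(a/g1-c1)^2 + (b/g2-c2)^2 < \<alpha> + l0"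
      unfolding \<alpha>_def by (auto simp: abs_less_iff field_simps)
    show "m1 \<in> H1 \<union> prod.swap ` H2"
    proof (cases "(a/g1-c1)^2 \<le> (b/g2-c2)^2")
      case True then have "m1 \<in> H1" using ball ann m1 unfolding H1_def by auto
      then show ?thesis by blast
    next
      case False
      then have "(b, a) \<in> H2" using ball ann unfolding H2_def by (auto simp: add.commute)
      then have "prod.swap (b, a) \<in> prod.swap ` H2" by blast
      then show ?thesis using m1 by simp
    qed
  qed
  have "card (resonant_set g1 g2 N2 l0 \<tau> m) \<le> card (H1 \<union> prod.swap ` H2)"
    by (rule card_mono[OF _ sub]) (use h1 h2 in simp)
  also have "\<dots> \<le> card H1 + card (prod.swap ` H2)" by (rule card_Un_le)
  also have "card (prod.swap ` H2) = card H2" by (rule card_image) simp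
  finally have "real (card (resonant_set g1 g2 N2 l0 \<tau> m)) \<le> real (card H1) + real (card H2)" by linarith
  also have "\<dots> \<le> 8*g1*g2*l0 + 2*(g1+g2)*(l0+1) + 8*(g1+g2)*N2 + 4"
    using h1(2) h2(2) unfolding r_def by (simp add: algebra_simps)
  finally show ?thesis .
qed

definition count_const :: "real \<Rightarrow> real \<Rightarrow> real" where
  "count_const g1 g2 = 32*g1*g2 + 18*(g1+g2) + 4 + (4*g1+1)*(4*g2+1)"

lemma count_const_pos: "g1 > 0 \<Longrightarrow> g2 > 0 \<Longrightarrow> count_const g1 g2 > 0"
  unfolding count_const_def by (simp add: add_pos_pos)

lemma card_resonant_set_le:
  assumes g1: "g1 > 0" and g2: "g2 > 0" and L1: "L1 \<ge> 1" and L2: "L2 \<ge> 1" and N: "N2 \<ge> 1"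
  shows "real (card (resonant_set g1 g2 N2 (2*(L1+L2)) \<tau> m)) \<le> count_const g1 g2 * min (N2^2) (max L1 L2 + N2)"
proof -
  let ?c = "real (card (resonant_set g1 g2 N2 (2*(L1+L2)) \<tau> m))"
  have ball: "?c \<le> (4*g1*N2 + 1) * (4*g2*N2 + 1)" using card_resonant_set_ball[OF g1 g2] N by auto
  also have "\<dots> \<le> (4*g1*N2 + N2) * (4*g2*N2 + N2)" using N g1 g2 by (intro mult_mono) auto
  also have "\<dots> = (4*g1+1)*(4*g2+1) * N2^2" by (simp add: algebra_simps power2_eq_square)
  also have "\<dots> \<le> count_const g1 g2 * N2^2" unfolding count_const_def using g1 g2 by (intro mult_right_mono) auto
  finally have c1: "?c \<le> count_const g1 g2 * N2^2" .
  have "?c \<le> 8*g1*g2*(2*(L1+L2)) + 2*(g1+g2)*(2*(L1+L2)+1) + 8*(g1+g2)*N2 + 4"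
    using card_resonant_set_annulus[OF g1 g2, of N2 "2*(L1+L2)" \<tau> m] N L1 L2 by auto
  also have "\<dots> \<le> (32*g1*g2 + 18*(g1+g2) + 4) * (max L1 L2 + N2)"
  proof -
    have A: "2*(L1+L2) \<le> 4 * max L1 L2" by (simp add: max_def)
    have B: "1 \<le> max L1 L2" using L1 by (simp add: max_def)
    have "8*g1*g2*(2*(L1+L2)) \<le> 8*g1*g2*(4 * max L1 L2)" using A g1 g2 by (intro mult_left_mono) auto
    moreover have "2*(g1+g2)*(2*(L1+L2)+1) \<le> 2*(g1+g2)*(5 * max L1 L2)" using A B g1 g2 by (intro mult_left_mono) auto
    moreover have "(4::real) \<le> 4 * max L1 L2" using B by linarith
    moreover have "0 \<le> g1*g2*N2" "0 \<le> (g1+g2) * max L1 L2" "0 \<le> g1*g2*max L1 L2"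
      "0 \<le> g1*N2" "0 \<le> g2*N2" "0 \<le> g1 * max L1 L2" "0 \<le> g2 * max L1 L2" "0 \<le> N2"
      using g1 g2 N B by auto
    ultimately show ?thesis by (simp add: algebra_simps)
  qed
  also have "\<dots> \<le> count_const g1 g2 * (max L1 L2 + N2)"
    unfolding count_const_def using g1 g2 N L1 by (intro mult_right_mono) auto
  finally have c2: "?c \<le> count_const g1 g2 * (max L1 L2 + N2)" .
  show ?thesis using c1 c2 by (simp add: min_def)
qed

section \<open>The estimate for dyadic pieces\<close>

lemma nn_integral_interval_indicator:
  fixes A w :: real assumes "w \<ge> 0"
  shows "(\<integral>\<^sup>+ t. indicator {t. \<bar>t + A\<bar> < w} t \<partial>lborel) = ennreal (2 * w)"
proof -
  have "{t. \<bar>t + A\<bar> < w} = {- A - w <..< - A + w}" by (auto simp: abs_less_iff)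
  then show ?thesis using assms by simp
qed

lemma nn_integral_interval_indicator':
  fixes B w \<tau> :: real assumes "w \<ge> 0"
  shows "(\<integral>\<^sup>+ t. indicator {t. \<bar>\<tau> - t + B\<bar> < w} t \<partial>lborel) = ennreal (2 * w)"
proof -
  have "{t. \<bar>\<tau> - t + B\<bar> < w} = {\<tau> + B - w <..< \<tau> + B + w}" by (auto simp: abs_less_iff)
  then show ?thesis using assms by simp
qed

lemma overlap_fiber_le:
  assumes L1: "L1 \<ge> 0" and L2: "L2 \<ge> 0"
  shows "(\<integral>\<^sup>+ \<tau>1. indicator {t. PS_region g1 g2 N1 L1 t m1} \<tau>1 * indicator {t. PS_region g1 g2 N2 L2 t (m - m1)} (\<tau> - \<tau>1) \<partial>lborel)
    \<le> ennreal (4 * min L1 L2) * indicator (resonant_set g1 g2 N2 (2*(L1+L2)) \<tau> m) m1" (is "?I \<le> _")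
proof (cases "m1 \<in> resonant_set g1 g2 N2 (2*(L1+L2)) \<tau> m")
  case False
  have "indicator {t. PS_region g1 g2 N1 L1 t m1} \<tau>1 * indicator {t. PS_region g1 g2 N2 L2 t (m - m1)} (\<tau> - \<tau>1) = (0::ennreal)" for \<tau>1
  proof (rule ccontr)
    assume "indicator {t. PS_region g1 g2 N1 L1 t m1} \<tau>1 * indicator {t. PS_region g1 g2 N2 L2 t (m - m1)} (\<tau> - \<tau>1) \<noteq> (0::ennreal)"
    then have "PS_region g1 g2 N1 L1 \<tau>1 m1" "PS_region g1 g2 N2 L2 (\<tau> - \<tau>1) (m - m1)" by (auto simp: indicator_def split: if_splits)
    then have "m1 \<in> resonant_set g1 g2 N2 (2*(L1+L2)) \<tau> m" unfolding PS_region_def resonant_set_def by (auto simp: abs_less_iff)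
    with False show False by simp
  qed
  then have "?I = 0" by (simp only:) simp
  then show ?thesis using False by simp
next
  case True
  have "?I \<le> (\<integral>\<^sup>+ t. indicator {t. \<bar>t + (knorm g1 g2 m1)^2\<bar> < 2 * L1} t \<partial>lborel)"
    by (intro nn_integral_mono) (auto simp: indicator_def PS_region_def)
  also have "\<dots> = ennreal (4 * L1)" using nn_integral_interval_indicator[of "2*L1"] L1 by simp
  finally have b1: "?I \<le> ennreal (4 * L1)" .
  have "?I \<le> (\<integral>\<^sup>+ t. indicator {t. \<bar>\<tau> - t + (knorm g1 g2 (m - m1))^2\<bar> < 2 * L2} t \<partial>lborel)"
    by (intro nn_integral_mono) (auto simp: indicator_def PS_region_def)
  also have "\<dots> = ennreal (4 * L2)" using nn_integral_interval_indicator'[of "2*L2"] L2 by simp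
  finally have b2: "?I \<le> ennreal (4 * L2)" .
  show ?thesis using b1 b2 True by (cases "L1 \<le> L2") (simp_all add: min_def)
qed

lemma overlap_le_card:
  assumes g1: "g1 > 0" and g2: "g2 > 0" and N: "N2 \<ge> 0" and L1: "L1 \<ge> 0" and L2: "L2 \<ge> 0"
  shows "overlap (PS_region g1 g2 N1 L1) (PS_region g1 g2 N2 L2) \<tau> m
    \<le> ennreal (4 * min L1 L2 * real (card (resonant_set g1 g2 N2 (2*(L1+L2)) \<tau> m)))"
proof -
  have fin: "finite (resonant_set g1 g2 N2 (2*(L1+L2)) \<tau> m)" using card_resonant_set_ball[OF g1 g2 N] by blast
  have "overlap (PS_region g1 g2 N1 L1) (PS_region g1 g2 N2 L2) \<tau> m
    \<le> (\<integral>\<^sup>+ m1. ennreal (4 * min L1 L2) * indicator (resonant_set g1 g2 N2 (2*(L1+L2)) \<tau> m) m1 \<partial>count_space UNIV)"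
    unfolding overlap_def by (intro nn_integral_mono overlap_fiber_le L1 L2)
  also have "\<dots> = ennreal (4 * min L1 L2) * of_nat (card (resonant_set g1 g2 N2 (2*(L1+L2)) \<tau> m))"
    using fin by (subst nn_integral_cmult) auto
  also have "\<dots> = ennreal (4 * min L1 L2 * real (card (resonant_set g1 g2 N2 (2*(L1+L2)) \<tau> m)))"
    using L1 L2 by (simp add: ennreal_mult ennreal_of_nat_eq_real_of_nat)
  finally show ?thesis .
qed

lemma le_powr_split:
  fixes x y a :: real
  assumes "0 < x" "x powr a \<le> y"
  shows "x \<le> x powr (1 - a) * y"
proof -
  have "x = x powr (1 - a) * x powr a" using assms(1) by (simp add: powr_add[symmetric])
  also have "\<dots> \<le> x powr (1 - a) * y" using assms(2) by (rule mult_left_mono) simp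
  finally show ?thesis .
qed

lemma power_powr: "(N::real) \<ge> 0 \<Longrightarrow> n \<noteq> 0 \<Longrightarrow> (N^n) powr a = N powr (real n * a)"
  by (metis powr_powr powr_realpow')

text \<open>The three cases are y \<le> N, N^2 \<le> y and N < y < N^2; in the last one x y \<le> N^4, which pays for
  the factor (x y) powr (2 e).\<close>
lemma dyadic_weight_ineq:
  fixes x y N e :: real
  assumes x: "1 \<le> x" and xy: "x \<le> y" and N: "1 \<le> N" and e: "0 < e" "e \<le> 1/4"
  shows "x * min (N^2) (y + N) \<le> 2 * ((x*y) powr (1 - 2*e) * N powr (8*e) + x * N powr (1 + 4*e))"
proof -
  have y: "1 \<le> y" using x xy by linarith
  have R1: "0 \<le> (x*y) powr (1 - 2*e) * N powr (8*e)" and R2: "0 \<le> x * N powr (1 + 4*e)" using x by simp_all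
  consider "y \<le> N" | "N^2 \<le> y" | "N < y" "y < N^2" by linarith
  then show ?thesis
  proof cases
    case 1
    have "x * min (N^2) (y + N) \<le> x * (2 * N)" using x 1 by (intro mult_left_mono) auto
    also have "\<dots> \<le> 2 * (x * N powr (1 + 4*e))"
      using powr_mono[of 1 "1 + 4*e" N] x N e by (simp add: mult_left_mono)
    also have "\<dots> \<le> 2 * ((x*y) powr (1 - 2*e) * N powr (8*e) + x * N powr (1 + 4*e))" using R1 by simp
    finally show ?thesis .
  next
    case 2
    have a1: "x \<le> x powr (1 - 2*e) * y powr (2*e)"
      using x xy e by (intro le_powr_split powr_mono2) auto
    have "(N^2) powr (1 - 4*e) \<le> y powr (1 - 4*e)" using N 2 e by (intro powr_mono2) auto
    then have a2: "N^2 \<le> (N^2) powr (4*e) * y powr (1 - 4*e)"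
      using le_powr_split[of "N^2" "1 - 4*e"] N by simp
    have "x * min (N^2) (y + N) \<le> (x powr (1 - 2*e) * y powr (2*e)) * (N powr (8*e) * y powr (1 - 4*e))"
      using a1 a2 x y N by (intro mult_mono) (auto simp: power_powr)
    also have "\<dots> = x powr (1 - 2*e) * (y powr (2*e) * y powr (1 - 4*e)) * N powr (8*e)" by (simp add: mult_ac)
    also have "\<dots> = (x*y) powr (1 - 2*e) * N powr (8*e)"
      using x y by (simp add: powr_mult flip: powr_add)
    also have "\<dots> \<le> 2 * ((x*y) powr (1 - 2*e) * N powr (8*e) + x * N powr (1 + 4*e))" using R1 R2 by simp
    finally show ?thesis .
  next
    case 3
    have "x * y \<le> N^2 * N^2" using 3 x xy y by (intro mult_mono) auto
    then have "(x*y) powr (2*e) \<le> (N^4) powr (2*e)" using e x y by (intro powr_mono2) auto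
    then have xy_le: "x * y \<le> (x*y) powr (1 - 2*e) * N powr (8*e)"
      using le_powr_split[of "x*y" "2*e"] x y N by (simp add: power_powr)
    have "x * min (N^2) (y + N) \<le> 2 * (x * y)" using x 3 by (simp add: algebra_simps)
    also have "\<dots> \<le> 2 * ((x*y) powr (1 - 2*e) * N powr (8*e) + x * N powr (1 + 4*e))"
      using xy_le R2 by simp
    finally show ?thesis .
  qed
qed

lemma dyadic_weight_sq_bound:
  fixes L1 L2 N e :: real
  assumes e: "0 < e" "e \<le> 1/4" and L1: "L1 \<ge> 1" and L2: "L2 \<ge> 1" and N: "N \<ge> 1"
  shows "min L1 L2 * min (N^2) (max L1 L2 + N)
    \<le> 2 * (L1 powr (1/2-e) * (N powr (4*e) * L2 powr (1/2-e) + N powr (1/2+2*e) * L2 powr e))^2"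
proof -
  define x where "x = min L1 L2"
  define P where "P = (L1*L2) powr (1 - 2*e) * N powr (8*e)"
  define Q where "Q = N powr (1 + 4*e)"
  have x1: "1 \<le> x" "x \<le> max L1 L2" unfolding x_def using L1 L2 by auto
  have "x * max L1 L2 = L1 * L2" unfolding x_def by (simp add: min_def max_def mult.commute)
  then have "x * min (N^2) (max L1 L2 + N) \<le> 2 * (P + x * Q)"
    using dyadic_weight_ineq[OF x1 N e] unfolding P_def Q_def by simp
  also have "x \<le> L1 powr (1 - 2*e) * L2 powr (2*e)"
  proof -
    have "x \<le> x powr (1 - 2*e) * L2 powr (2*e)"
      using x1 e unfolding x_def by (intro le_powr_split powr_mono2) auto
    also have "\<dots> \<le> L1 powr (1 - 2*e) * L2 powr (2*e)"
      using x1 e unfolding x_def by (intro mult_right_mono powr_mono2) auto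
    finally show ?thesis .
  qed
  then have "2 * (P + x * Q) \<le> 2 * (P + L1 powr (1 - 2*e) * L2 powr (2*e) * Q)"
    unfolding Q_def by (simp add: mult_right_mono)
  also have "P + L1 powr (1 - 2*e) * L2 powr (2*e) * Q
      = (L1 powr (1/2-e) * (N powr (4*e) * L2 powr (1/2-e)))^2 + (L1 powr (1/2-e) * (N powr (1/2+2*e) * L2 powr e))^2"
    unfolding P_def Q_def using L1 L2 N by (simp add: power_mult_distrib powr_power powr_mult mult_ac algebra_simps)
  also have "\<dots> \<le> (L1 powr (1/2-e) * (N powr (4*e) * L2 powr (1/2-e) + N powr (1/2+2*e) * L2 powr e))^2"
    by (simp add: power2_sum distrib_left)
  finally show ?thesis unfolding x_def by simp
qed

lemma overlap_le_dyadic_weight: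
  assumes g1: "g1 > 0" and g2: "g2 > 0" and e: "0 < e" "e \<le> 1/4"
    and L1: "L1 \<ge> 1" and L2: "L2 \<ge> 1" and N: "N2 \<ge> 1"
  shows "overlap (PS_region g1 g2 N1 L1) (PS_region g1 g2 N2 L2) \<tau> m
    \<le> ennreal (8 * count_const g1 g2 * (L1 powr (1/2-e) * (N2 powr (4*e) * L2 powr (1/2-e) + N2 powr (1/2+2*e) * L2 powr e))^2)"
proof -
  let ?c = "real (card (resonant_set g1 g2 N2 (2*(L1+L2)) \<tau> m))"
  let ?W = "L1 powr (1/2-e) * (N2 powr (4*e) * L2 powr (1/2-e) + N2 powr (1/2+2*e) * L2 powr e)"
  have "4 * min L1 L2 * ?c \<le> 4 * min L1 L2 * (count_const g1 g2 * min (N2^2) (max L1 L2 + N2))"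
    using card_resonant_set_le[OF g1 g2 L1 L2 N] L1 L2 by (intro mult_left_mono) auto
  also have "\<dots> = 4 * count_const g1 g2 * (min L1 L2 * min (N2^2) (max L1 L2 + N2))" by (simp add: mult_ac)
  also have "\<dots> \<le> 4 * count_const g1 g2 * (2 * ?W^2)"
    using dyadic_weight_sq_bound[OF e L1 L2 N] count_const_pos[OF g1 g2] by (intro mult_left_mono) auto
  finally have "4 * min L1 L2 * ?c \<le> 8 * count_const g1 g2 * ?W^2" by simp
  then have "ennreal (4 * min L1 L2 * ?c) \<le> ennreal (8 * count_const g1 g2 * ?W^2)"
    by (rule ennreal_leI)
  with overlap_le_card[OF g1 g2, of N2 L1 L2 N1 \<tau> m] N L1 L2 show ?thesis by simp
qed

lemma mixed_norm_conv_PS_le: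
  assumes g: "g1 > 0" "g2 > 0" and b: "bump \<eta>" and e: "0 < e" "e \<le> 1/4"
    and m1: "\<And>m. (\<lambda>\<tau>. F1 \<tau> m) \<in> borel_measurable lborel"
    and m2: "\<And>m. (\<lambda>\<tau>. F2 \<tau> m) \<in> borel_measurable lborel"
  shows "mixed_norm (conv (abs_ft (PS g1 g2 \<eta> (2^j1) (2^l1) F1)) (abs_ft (PS g1 g2 \<eta> (2^j2) (2^l2) F2)))
     \<le> ennreal (sqrt (8 * count_const g1 g2))
       * (ennreal ((2^l1) powr (1/2 - e)) * mixed_norm (abs_ft (PS g1 g2 \<eta> (2^j1) (2^l1) F1)))
       * (ennreal ((2^j2) powr (4*e) * (2^l2) powr (1/2 - e)) * mixed_norm (abs_ft (PS g1 g2 \<eta> (2^j2) (2^l2) F2))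
          + ennreal ((2^j2) powr (1/2 + 2*e) * (2^l2) powr e) * mixed_norm (abs_ft (PS g1 g2 \<eta> (2^j2) (2^l2) F2)))"
proof -
  define A where "A = abs_ft (PS g1 g2 \<eta> (2^j1) (2^l1) F1)"
  define B where "B = abs_ft (PS g1 g2 \<eta> (2^j2) (2^l2) F2)"
  define w1 :: real where "w1 = (2^l1) powr (1/2 - e)"
  define wa :: real where "wa = (2^j2) powr (4*e) * (2^l2) powr (1/2 - e)"
  define wb :: real where "wb = (2^j2) powr (1/2 + 2*e) * (2^l2) powr e"
  define M where "M = ennreal (8 * count_const g1 g2 * (w1 * (wa + wb))^2)"
  have K: "count_const g1 g2 > 0" using count_const_pos g .
  have w: "0 \<le> w1" "0 \<le> wa" "0 \<le> wb" unfolding w1_def wa_def wb_def by simp_all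
  have "mixed_norm_sq (conv A B) \<le> M * (mixed_norm_sq A * mixed_norm_sq B)"
  proof (rule mixed_norm_sq_conv_le[where sa = "PS_region g1 g2 (2^j1) (2^l1)" and sb = "PS_region g1 g2 (2^j2) (2^l2)"])
    show "\<And>\<tau> m. overlap (PS_region g1 g2 (2^j1) (2^l1)) (PS_region g1 g2 (2^j2) (2^l2)) \<tau> m \<le> M"
      unfolding M_def w1_def wa_def wb_def distrib_left[symmetric]
      by (rule overlap_le_dyadic_weight[OF g e]) simp_all
  qed (unfold A_def B_def, (rule borel_measurable_abs_PS b m1 m2 sets_PS_region abs_PS_outside_region[OF b]
       | assumption)+)
  then have "mixed_norm (conv A B) \<le> enn_sqrt M * (mixed_norm A * mixed_norm B)"
    unfolding mixed_norm_def enn_sqrt_mult[symmetric] by (rule enn_sqrt_mono)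
  also have "enn_sqrt M = ennreal (sqrt (8 * count_const g1 g2) * w1 * (wa + wb))"
    unfolding M_def using K w by (simp add: enn_sqrt_ennreal real_sqrt_mult mult.assoc)
  also have "\<dots> = ennreal (sqrt (8 * count_const g1 g2)) * ennreal w1 * (ennreal wa + ennreal wb)"
    using K w by (simp add: ennreal_mult ennreal_plus)
  finally show ?thesis
    unfolding A_def B_def w1_def wa_def wb_def by (simp add: algebra_simps)
qed

lemma suminf4_mult_factor:
  fixes u v :: "nat \<Rightarrow> nat \<Rightarrow> ennreal"
  shows "(\<Sum>a. \<Sum>b. \<Sum>c. \<Sum>d. k * (u a b * v c d)) = k * ((\<Sum>a. \<Sum>b. u a b) * (\<Sum>c. \<Sum>d. v c d))"
  by (simp only: mult.assoc[symmetric] ennreal_suminf_cmult ennreal_suminf_multc)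

lemma L2norm_prod_ft_le_sum_PS:
  assumes g: "g1 > 0" "g2 > 0" and b: "bump \<eta>"
    and m1: "\<And>m. (\<lambda>\<tau>. F1 \<tau> m) \<in> borel_measurable lborel"
    and m2: "\<And>m. (\<lambda>\<tau>. F2 \<tau> m) \<in> borel_measurable lborel"
  shows "L2norm g1 g2 (prod_ft g1 g2 F1 F2) \<le> ennreal (sqrt (plancherel_const g1 g2))^3 *
    (\<Sum>j1. \<Sum>l1. \<Sum>j2. \<Sum>l2. mixed_norm (conv (abs_ft (PS g1 g2 \<eta> (2^j1) (2^l1) F1)) (abs_ft (PS g1 g2 \<eta> (2^j2) (2^l2) F2))))"
proof -
  have "L2norm g1 g2 (prod_ft g1 g2 F1 F2) \<le> ennreal (sqrt (plancherel_const g1 g2))^3 * mixed_norm (conv (abs_ft F1) (abs_ft F2))"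
    by (rule L2norm_prod_ft_le[OF g m1 m2])
  also have "mixed_norm (conv (abs_ft F1) (abs_ft F2)) \<le> mixed_norm (\<lambda>\<tau> m. \<Sum>j1. \<Sum>l1. \<Sum>j2. \<Sum>l2.
      conv (abs_ft (PS g1 g2 \<eta> (2^j1) (2^l1) F1)) (abs_ft (PS g1 g2 \<eta> (2^j2) (2^l2) F2)) \<tau> m)"
    by (rule mixed_norm_mono) (rule conv_abs_le_sum_PS[OF b m1 m2])
  also have "\<dots> \<le> (\<Sum>j1. \<Sum>l1. \<Sum>j2. \<Sum>l2. mixed_norm (conv (abs_ft (PS g1 g2 \<eta> (2^j1) (2^l1) F1)) (abs_ft (PS g1 g2 \<eta> (2^j2) (2^l2) F2))))"
    by (intro mixed_norm_suminf4_le borel_measurable_conv borel_measurable_abs_PS b m1 m2)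
  finally show ?thesis by (simp add: mult_left_mono)
qed

definition bilinear_const :: "real \<Rightarrow> real \<Rightarrow> real" where
  "bilinear_const g1 g2 = sqrt (plancherel_const g1 g2) * sqrt (8 * count_const g1 g2)"

lemma bilinear_const_pos: "g1 > 0 \<Longrightarrow> g2 > 0 \<Longrightarrow> bilinear_const g1 g2 > 0"
  unfolding bilinear_const_def using plancherel_const_pos count_const_pos by simp

lemma L2norm_prod_ft_le_rows:
  assumes g: "g1 > 0" "g2 > 0" and b: "bump \<eta>" and e: "0 < e" "e \<le> 1/4"
    and m1: "\<And>m. (\<lambda>\<tau>. F1 \<tau> m) \<in> borel_measurable lborel"
    and m2: "\<And>m. (\<lambda>\<tau>. F2 \<tau> m) \<in> borel_measurable lborel"
  shows "L2norm g1 g2 (prod_ft g1 g2 F1 F2) \<le> ennreal (bilinear_const g1 g2) *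
    ((\<Sum>j. XS1_row g1 g2 \<eta> 0 (1/2 - e) F1 j)
     * ((\<Sum>j. XS1_row g1 g2 \<eta> (4*e) (1/2 - e) F2 j) + (\<Sum>j. XS1_row g1 g2 \<eta> (1/2 + 2*e) e F2 j)))"
proof -
  define sc where "sc = ennreal (sqrt (plancherel_const g1 g2))"
  define k0 where "k0 = ennreal (sqrt (8 * count_const g1 g2))"
  define r where "r s b F j l = ennreal ((2 ^ j) powr s * (2 ^ l) powr b) * L2norm g1 g2 (PS g1 g2 \<eta> (2 ^ j) (2 ^ l) F)"
    for s b :: real and F and j l :: nat
  have rows: "(\<Sum>j. XS1_row g1 g2 \<eta> s b F j) = (\<Sum>j. \<Sum>l. r s b F j l)" for s b F
    unfolding XS1_row_def r_def ..
  have L2PS: "L2norm g1 g2 (PS g1 g2 \<eta> (2^j) (2^l) F) = sc * mixed_norm (abs_ft (PS g1 g2 \<eta> (2^j) (2^l) F))"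
    if "\<And>m. (\<lambda>\<tau>. F \<tau> m) \<in> borel_measurable lborel" for F j l
    unfolding sc_def by (rule L2norm_eq_mixed_norm[OF g borel_measurable_abs_PS[OF b that]])
  have piece: "sc^3 * mixed_norm (conv (abs_ft (PS g1 g2 \<eta> (2^j1) (2^l1) F1)) (abs_ft (PS g1 g2 \<eta> (2^j2) (2^l2) F2)))
      \<le> ennreal (bilinear_const g1 g2) * (r 0 (1/2 - e) F1 j1 l1 * (r (4*e) (1/2 - e) F2 j2 l2 + r (1/2 + 2*e) e F2 j2 l2))"
    for j1 l1 j2 l2
  proof -
    have "ennreal (bilinear_const g1 g2) = sc * k0"
      unfolding bilinear_const_def sc_def k0_def
      using plancherel_const_pos[OF g] count_const_pos[OF g] by (simp add: ennreal_mult)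
    then show ?thesis
      using mult_left_mono[OF mixed_norm_conv_PS_le[of g1 g2 \<eta> e F1 F2 j1 l1 j2 l2, OF g b e m1 m2], of "sc^3"]
      unfolding r_def L2PS[OF m1] L2PS[OF m2] k0_def
      by (simp add: power3_eq_cube algebra_simps)
  qed
  have "L2norm g1 g2 (prod_ft g1 g2 F1 F2) \<le> sc^3 *
    (\<Sum>j1. \<Sum>l1. \<Sum>j2. \<Sum>l2. mixed_norm (conv (abs_ft (PS g1 g2 \<eta> (2^j1) (2^l1) F1)) (abs_ft (PS g1 g2 \<eta> (2^j2) (2^l2) F2))))"
    unfolding sc_def by (rule L2norm_prod_ft_le_sum_PS[OF g b m1 m2])
  also have "\<dots> \<le> (\<Sum>j1. \<Sum>l1. \<Sum>j2. \<Sum>l2. ennreal (bilinear_const g1 g2)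
      * (r 0 (1/2 - e) F1 j1 l1 * (r (4*e) (1/2 - e) F2 j2 l2 + r (1/2 + 2*e) e F2 j2 l2)))"
    unfolding ennreal_suminf_cmult[symmetric] by (intro suminf_le summableI allI piece)
  also have "\<dots> = ennreal (bilinear_const g1 g2) * ((\<Sum>j. \<Sum>l. r 0 (1/2 - e) F1 j l)
      * (\<Sum>j. \<Sum>l. r (4*e) (1/2 - e) F2 j l + r (1/2 + 2*e) e F2 j l))"
    by (rule suminf4_mult_factor)
  also have "(\<Sum>j. \<Sum>l. r (4*e) (1/2 - e) F2 j l + r (1/2 + 2*e) e F2 j l)
      = (\<Sum>j. \<Sum>l. r (4*e) (1/2 - e) F2 j l) + (\<Sum>j. \<Sum>l. r (1/2 + 2*e) e F2 j l)"
    by (simp add: suminf_add)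
  finally show ?thesis unfolding rows .
qed

lemma L2norm_prod_ft_le_XS1:
  assumes g: "g1 > 0" "g2 > 0" and b: "bump \<eta>" and e: "0 < e" "e \<le> 1/4"
    and d1: "dyadic N1" and d2: "dyadic N2"
    and m1: "\<And>m. (\<lambda>\<tau>. F1 \<tau> m) \<in> borel_measurable lborel"
    and m2: "\<And>m. (\<lambda>\<tau>. F2 \<tau> m) \<in> borel_measurable lborel"
    and s1: "supp_in_PN g1 g2 N1 F1" and s2: "supp_in_PN g1 g2 N2 F2"
  shows "L2norm g1 g2 (prod_ft g1 g2 F1 F2) \<le> ennreal (9 * bilinear_const g1 g2) *
     (XS1 g1 g2 \<eta> 0 (1/2 - e) F1 * XS1 g1 g2 \<eta> (4 * e) (1/2 - e) F2
      + XS1 g1 g2 \<eta> 0 (1/2 - e) F1 * XS1 g1 g2 \<eta> (1/2 + 2 * e) e F2)"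
proof -
  note row1 = suminf_XS1_row_le[OF b d1 s1] and row2 = suminf_XS1_row_le[OF b d2 s2]
  have "L2norm g1 g2 (prod_ft g1 g2 F1 F2) \<le> ennreal (bilinear_const g1 g2) *
    ((3 * XS1 g1 g2 \<eta> 0 (1/2 - e) F1)
     * (3 * XS1 g1 g2 \<eta> (4*e) (1/2 - e) F2 + 3 * XS1 g1 g2 \<eta> (1/2 + 2*e) e F2))"
    by (rule order_trans[OF L2norm_prod_ft_le_rows[OF g b e m1 m2]])
       (intro mult_left_mono mult_mono add_mono row1 row2; simp)
  then show ?thesis
    using bilinear_const_pos[OF g] by (simp add: ennreal_mult algebra_simps)
qed

lemma L2norm_prod_ft_le_max_powr:
  assumes g: "g1 > 0" "g2 > 0" and b: "bump \<eta>" and e: "0 < e" "e \<le> 1/4"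
    and d1: "dyadic N1" and d2: "dyadic N2"
    and m1: "\<forall>m. (\<lambda>\<tau>. F1 \<tau> m) \<in> borel_measurable lborel"
    and m2: "\<forall>m. (\<lambda>\<tau>. F2 \<tau> m) \<in> borel_measurable lborel"
    and s1: "supp_in_PN g1 g2 N1 F1" and s2: "supp_in_PN g1 g2 N2 F2"
  shows "L2norm g1 g2 (prod_ft g1 g2 F1 F2) \<le> ennreal (9 * bilinear_const g1 g2 * (max N1 N2) powr e) *
     (XS1 g1 g2 \<eta> 0 (1/2 - e) F1 * XS1 g1 g2 \<eta> (4 * e) (1/2 - e) F2
      + XS1 g1 g2 \<eta> 0 (1/2 - e) F1 * XS1 g1 g2 \<eta> (1/2 + 2 * e) e F2)"
proof -
  have "1 \<le> N1" using d1 by (auto simp: dyadic_def)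
  then have "1 \<le> (max N1 N2) powr e" using e by (simp add: ge_one_powr_ge_zero)
  then have "ennreal (9 * bilinear_const g1 g2) \<le> ennreal (9 * bilinear_const g1 g2 * (max N1 N2) powr e)"
    using bilinear_const_pos[OF g] by (intro ennreal_leI) simp
  then show ?thesis
    using L2norm_prod_ft_le_XS1[OF g b e d1 d2 _ _ s1 s2] m1 m2 by (meson mult_right_mono order_trans zero_le)
qed

theorem lemma4p3:
  fixes g1 g2 :: real and \<eta> :: "real \<Rightarrow> real"
  assumes "g1 > 0" and "g2 > 0" and "bump \<eta>"
  shows "\<exists>\<epsilon>0>0. \<forall>\<epsilon>. 0 < \<epsilon> \<and> \<epsilon> < \<epsilon>0 \<longrightarrow>
    (\<exists>C::real. C > 0 \<and>
      (\<forall>N1 N2 (F1::stfun) (F2::stfun).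
         dyadic N1 \<and> dyadic N2 \<and>
         (\<forall>m. (\<lambda>\<tau>. F1 \<tau> m) \<in> borel_measurable lborel) \<and>
         (\<forall>m. (\<lambda>\<tau>. F2 \<tau> m) \<in> borel_measurable lborel) \<and>
         supp_in_PN g1 g2 N1 F1 \<and> supp_in_PN g1 g2 N2 F2 \<longrightarrow>
         L2norm g1 g2 (prod_ft g1 g2 F1 F2)
           \<le> ennreal (C * (max N1 N2) powr \<epsilon>) *
              (XS1 g1 g2 \<eta> 0 (1/2 - \<epsilon>) F1 * XS1 g1 g2 \<eta> (4 * \<epsilon>) (1/2 - \<epsilon>) F2
               + XS1 g1 g2 \<eta> 0 (1/2 - \<epsilon>) F1 * XS1 g1 g2 \<eta> (1/2 + 2 * \<epsilon>) \<epsilon> F2)))"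
  using bilinear_const_pos[OF assms(1,2)] L2norm_prod_ft_le_max_powr[OF assms]
  by (intro exI[of _ "1/4"] conjI allI impI exI[of _ "9 * bilinear_const g1 g2"]) auto

end
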